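(* For every local function $\phi\in\mathcal C^1(\Theta)$, the map $\nu\mapsto\phi\nu$ (multiplication of the measure by $\phi$, i.e. $(\phi\nu)(f)=\nu(\phi f)$) is a bounded linear operator on $\mathcal B$.
   Context: Let $I=[0,1]$, $d\ge1$, $\Theta=I^{\mathbb Z^d}$ with the product Borel $\sigma$-algebra. A local function is one depending on finitely many coordinates $\theta_i$. For a complex finite Borel measure $\mu$ on $\Theta$ let $\|\mu\|=\sup_{i\in\mathbb Z^d}\sup\{\mu(\partial_{\theta_i}\varphi):\varphi$ smooth local function with $|\varphi|_\infty\le1\}$ and $\mathcal B=\{\mu:\|\mu\|<\infty\}$ normed by $\|\cdot\|$. *)

theory Defs
  imports "HOL-Analysis.Analysis"
begin

text \<open>Configuration space Theta = [0,1]^(Z^d); sites are int^'d with 'd a finite type (d = CARD('d) \<ge> 1).\<close>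

definition Theta :: "(int^'d::finite \<Rightarrow> real) set" where
  "Theta = {\<theta>. \<forall>i. \<theta> i \<in> {0..1}}"

definition ThetaM :: "(int^'d::finite \<Rightarrow> real) measure" where
  "ThetaM = PiM UNIV (\<lambda>_. restrict_space borel {0..(1::real)})"

definition local_fun :: "((int^'d::finite \<Rightarrow> real) \<Rightarrow> 'b) \<Rightarrow> bool" where
  "local_fun \<phi> \<longleftrightarrow> (\<exists>S. finite S \<and> (\<forall>\<theta> \<theta>'. (\<forall>j\<in>S. \<theta> j = \<theta>' j) \<longrightarrow> \<phi> \<theta> = \<phi> \<theta>'))"

definition has_partial :: "int^'d::finite \<Rightarrow> ((int^'d \<Rightarrow> real) \<Rightarrow> real) \<Rightarrow> bool" where
  "has_partial i \<phi> \<longleftrightarrow> (\<forall>\<theta>\<in>Theta. (\<lambda>t. \<phi> (\<theta>(i := t))) differentiable (at (\<theta> i) within {0..1}))"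

definition partial :: "int^'d::finite \<Rightarrow> ((int^'d \<Rightarrow> real) \<Rightarrow> real) \<Rightarrow> (int^'d \<Rightarrow> real) \<Rightarrow> real" where
  "partial i \<phi> \<theta> = (SOME D. ((\<lambda>t. \<phi> (\<theta>(i := t))) has_real_derivative D) (at (\<theta> i) within {0..1}))"

fun Ck :: "nat \<Rightarrow> ((int^'d::finite \<Rightarrow> real) \<Rightarrow> real) \<Rightarrow> bool" where
  "Ck 0 \<phi> \<longleftrightarrow> continuous_on Theta \<phi>"
| "Ck (Suc k) \<phi> \<longleftrightarrow> continuous_on Theta \<phi> \<and> (\<forall>i. has_partial i \<phi> \<and> Ck k (partial i \<phi>))"

definition smooth :: "((int^'d::finite \<Rightarrow> real) \<Rightarrow> real) \<Rightarrow> bool" where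
  "smooth \<phi> \<longleftrightarrow> (\<forall>k. Ck k \<phi>)"

definition complex_measure :: "((int^'d::finite \<Rightarrow> real) set \<Rightarrow> complex) \<Rightarrow> bool" where
  "complex_measure \<nu> \<longleftrightarrow>
     (\<forall>A. A \<notin> sets ThetaM \<longrightarrow> \<nu> A = 0) \<and> \<nu> {} = 0 \<and>
     (\<forall>A::nat \<Rightarrow> _. range A \<subseteq> sets ThetaM \<longrightarrow> disjoint_family A \<longrightarrow>
        (\<lambda>n. \<nu> (A n)) sums \<nu> (\<Union>n. A n))"

definition cm_integral :: "((int^'d::finite \<Rightarrow> real) set \<Rightarrow> complex) \<Rightarrow> ((int^'d \<Rightarrow> real) \<Rightarrow> real) \<Rightarrow> complex" where
  "cm_integral \<nu> f = (SOME c. \<exists>\<mu>1 \<mu>2 \<mu>3 \<mu>4.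
      (\<forall>\<mu>\<in>{\<mu>1,\<mu>2,\<mu>3,\<mu>4}. finite_measure \<mu> \<and> sets \<mu> = sets ThetaM) \<and>
      (\<forall>A\<in>sets ThetaM. \<nu> A = complex_of_real (measure \<mu>1 A - measure \<mu>2 A)
                                + \<i> * complex_of_real (measure \<mu>3 A - measure \<mu>4 A)) \<and>
      c = complex_of_real ((\<integral>x. f x \<partial>\<mu>1) - (\<integral>x. f x \<partial>\<mu>2))
          + \<i> * complex_of_real ((\<integral>x. f x \<partial>\<mu>3) - (\<integral>x. f x \<partial>\<mu>4)))"

definition cm_norm :: "((int^'d::finite \<Rightarrow> real) set \<Rightarrow> complex) \<Rightarrow> ereal" where
  "cm_norm \<nu> = (SUP p \<in> {(i, \<phi>). smooth \<phi> \<and> local_fun \<phi> \<and> (\<forall>\<theta>\<in>Theta. \<bar>\<phi> \<theta>\<bar> \<le> 1)}.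
                  ereal (cmod (cm_integral \<nu> (partial (fst p) (snd p)))))"

definition Bspace :: "((int^'d::finite \<Rightarrow> real) set \<Rightarrow> complex) set" where
  "Bspace = {\<nu>. complex_measure \<nu> \<and> cm_norm \<nu> < \<infinity>}"

definition mult_measure :: "((int^'d::finite \<Rightarrow> real) \<Rightarrow> real) \<Rightarrow> ((int^'d \<Rightarrow> real) set \<Rightarrow> complex) \<Rightarrow> ((int^'d \<Rightarrow> real) set \<Rightarrow> complex)" where
  "mult_measure \<phi> \<nu> = (\<lambda>A. if A \<in> sets ThetaM then cm_integral \<nu> (\<lambda>\<theta>. \<phi> \<theta> * indicator A \<theta>) else 0)"

end

theory Submission
  imports Defs
begin

text \<open>For a test function \<open>\<psi>\<close> the product rule gives
  \<open>(\<phi>\<nu>)(\<partial>\<^sub>i\<psi>) = \<nu>(\<partial>\<^sub>i(\<phi>\<psi>)) - \<nu>(\<psi> \<partial>\<^sub>i\<phi>)\<close>. The first term is at most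
  \<open>sup \<bar>\<phi>\<bar> \<cdot> \<parallel>\<nu>\<parallel>\<close>; the second is at most \<open>sup\<^sub>j sup \<bar>\<partial>\<^sub>j\<phi>\<bar> \<cdot> \<parallel>\<nu>\<parallel>\<close>, which is
  finite because \<open>\<phi>\<close> depends on finitely many coordinates, and because \<open>\<parallel>\<nu>\<parallel>\<close> also controls
  \<open>\<nu>(g)\<close> for continuous \<open>g\<close>: write \<open>g\<close> as a partial derivative of its antiderivative in one
  coordinate. Since \<open>\<phi>\<psi>\<close> is only \<open>C\<^sup>1\<close> and \<open>g\<close> only continuous, both estimates go through
  Stone--Weierstrass approximation by polynomials in finitely many coordinates, which are smooth
  and local. Complex measures are handled through Jordan decompositions of their real and
  imaginary parts; integrals do not depend on the decomposition chosen, which yields linearity.\<close>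

section \<open>Real signed measures\<close>

lemma disjoint_family_from_splitting:
  assumes start: "U A\<^sub>0"
    and split: "\<And>A. U A \<Longrightarrow> \<exists>B C. U B \<and> B \<subseteq> A \<and> C \<subseteq> A \<and> B \<inter> C = {} \<and> P C"
  shows "\<exists>E :: nat \<Rightarrow> _. disjoint_family E \<and> (\<forall>n. P (E n))"
proof -
  have "\<exists>p. U A \<longrightarrow> U (fst p) \<and> fst p \<subseteq> A \<and> snd p \<subseteq> A \<and> fst p \<inter> snd p = {} \<and> P (snd p)" for A
    using split by fastforce
  then obtain nxt where nxt: "\<And>A. U A \<Longrightarrow> U (fst (nxt A)) \<and> fst (nxt A) \<subseteq> A \<and> snd (nxt A) \<subseteq> A
      \<and> fst (nxt A) \<inter> snd (nxt A) = {} \<and> P (snd (nxt A))"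
    by metis
  define S where "S n = rec_nat A\<^sub>0 (\<lambda>_ A. fst (nxt A)) n" for n
  have S_Suc: "S (Suc n) = fst (nxt (S n))" for n
    by (simp add: S_def)
  have US: "U (S n)" for n
    by (induction n) (use start nxt in \<open>simp_all add: S_def\<close>)
  define E where "E n = snd (nxt (S n))" for n
  have "S (Suc n) \<subseteq> S n" for n
    using nxt[OF US[of n]] by (simp add: S_Suc)
  then have "decseq S"
    by (rule decseq_SucI)
  have "E m \<inter> E n = {}" if "n < m" for m n
  proof -
    have "E m \<subseteq> S (Suc n)"
      using nxt[OF US[of m]] \<open>decseq S\<close> that unfolding decseq_def E_def by (meson Suc_leI subset_trans)
    then show ?thesis
      using nxt[OF US[of n]] by (auto simp: E_def S_Suc)
  qed
  then have "disjoint_family E"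
    unfolding disjoint_family_on_def by (metis Int_commute linorder_neqE_nat)
  moreover have "\<forall>n. P (E n)"
    using nxt[OF US] by (simp add: E_def)
  ultimately show ?thesis
    by blast
qed

locale real_signed_measure =
  fixes M :: "'a measure" and \<rho> :: "'a set \<Rightarrow> real"
  assumes sums_Union: "range A \<subseteq> sets M \<Longrightarrow> disjoint_family A \<Longrightarrow> (\<lambda>n. \<rho> (A n)) sums \<rho> (\<Union>n. A n)"
    and empty: "\<rho> {} = 0"
begin

lemma Un:
  assumes A: "A \<in> sets M" and B: "B \<in> sets M" and AB: "A \<inter> B = {}"
  shows "\<rho> (A \<union> B) = \<rho> A + \<rho> B"
proof -
  define F where "F n = (if n = 0 then A else if n = Suc 0 then B else {})" for n :: nat
  have "(\<lambda>n. \<rho> (F n)) sums \<rho> (\<Union>n. F n)"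
    using A B AB by (intro sums_Union) (auto simp: F_def disjoint_family_on_def)
  moreover have "(\<Union>n. F n) = A \<union> B"
    by (auto simp: F_def split: if_splits)
  moreover have "(\<lambda>n. \<rho> (F n)) sums (\<Sum>n\<in>{0, Suc 0}. \<rho> (F n))"
    by (rule sums_finite) (auto simp: F_def empty)
  ultimately show ?thesis
    by (simp add: F_def sums_unique2)
qed

lemma Diff: "A \<in> sets M \<Longrightarrow> B \<in> sets M \<Longrightarrow> B \<subseteq> A \<Longrightarrow> \<rho> (A - B) = \<rho> A - \<rho> B"
  using Un[of "A - B" B] by (simp add: Un_absorb2 Int_commute)

lemma Int_Diff: "A \<in> sets M \<Longrightarrow> B \<in> sets M \<Longrightarrow> \<rho> A = \<rho> (A \<inter> B) + \<rho> (A - B)"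
  using Un[of "A \<inter> B" "A - B"] by (simp add: Int_Diff_Un Int_Diff_disjoint)

lemma restrict: "Y \<in> sets M \<Longrightarrow> real_signed_measure M (\<lambda>A. \<rho> (A \<inter> Y))"
proof
  fix A :: "nat \<Rightarrow> 'a set" assume "Y \<in> sets M" "range A \<subseteq> sets M" "disjoint_family A"
  then have "(\<lambda>n. \<rho> (A n \<inter> Y)) sums \<rho> (\<Union>n. A n \<inter> Y)"
    by (intro sums_Union) (auto simp: disjoint_family_on_def)
  then show "(\<lambda>n. \<rho> (A n \<inter> Y)) sums \<rho> ((\<Union>n. A n) \<inter> Y)"
    by (simp add: Int_UN_distrib2)
qed (simp add: empty)

lemma uminus: "real_signed_measure M (\<lambda>A. - \<rho> A)"
  by unfold_locales (auto intro: sums_minus sums_Union simp: empty)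

lemma tendsto_UN:
  assumes "range A \<subseteq> sets M" "incseq A"
  shows "(\<lambda>n. \<rho> (A n)) \<longlonglongrightarrow> \<rho> (\<Union>n. A n)"
proof -
  let ?D = "disjointed A"
  have D: "range ?D \<subseteq> sets M"
    using assms(1) by (rule sets.range_disjointed_sets)
  have partial_sums: "\<rho> (\<Union>i<n. ?D i) = (\<Sum>i<n. \<rho> (?D i))" for n
  proof (induction n)
    case (Suc n)
    have "(\<Union>i<n. ?D i) \<inter> ?D n = {}"
    proof -
      have "\<forall>i<n. ?D i \<inter> ?D n = {}"
        using disjoint_family_disjointed[of A] unfolding disjoint_family_on_def by auto
      then show ?thesis
        by blast
    qed
    moreover have "(\<Union>i<n. ?D i) \<in> sets M"
      using D by auto
    ultimately show ?case
      using Suc D Un[of "\<Union>i<n. ?D i" "?D n"] by (simp add: lessThan_Suc Un_commute)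
  qed (simp add: empty)
  have "(\<Union>i<Suc n. ?D i) = A n" for n
  proof -
    have "(\<Union>i<Suc n. ?D i) = (\<Union>i<Suc n. A i)"
      using finite_UN_disjointed_eq[of A "Suc n"] by (simp add: atLeast0LessThan)
    also have "\<dots> = A n"
      using assms(2) unfolding incseq_def by (auto simp: less_Suc_eq_le) blast
    finally show ?thesis .
  qed
  then have "\<rho> (A n) = (\<Sum>i<Suc n. \<rho> (?D i))" for n
    by (simp only: partial_sums[symmetric])
  moreover have "(\<lambda>n. \<Sum>i<n. \<rho> (?D i)) \<longlonglongrightarrow> \<rho> (\<Union>n. A n)"
    using sums_Union[OF D disjoint_family_disjointed] by (simp add: sums_def UN_disjointed_eq)
  ultimately show ?thesis
    using LIMSEQ_Suc[of "\<lambda>n. \<Sum>i<n. \<rho> (?D i)"] by presburger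
qed

lemma tendsto_INT:
  assumes A: "range A \<subseteq> sets M" and "decseq A"
  shows "(\<lambda>n. \<rho> (A n)) \<longlonglongrightarrow> \<rho> (\<Inter>n. A n)"
proof -
  have "(\<lambda>n. \<rho> (space M - A n)) \<longlonglongrightarrow> \<rho> (\<Union>n. space M - A n)"
    using assms by (intro tendsto_UN) (auto simp: incseq_def decseq_def)
  moreover have "\<rho> (space M - A n) = \<rho> (space M) - \<rho> (A n)" for n
    using A by (intro Diff) (auto dest: sets.sets_into_space)
  moreover have "(\<Inter>n. A n) \<subseteq> space M"
    using A sets.sets_into_space[of "A 0" M] by auto
  then have "\<rho> (\<Union>n. space M - A n) = \<rho> (space M) - \<rho> (\<Inter>n. A n)"
    using A by (simp only: UN_simps) (intro Diff, auto)
  ultimately have "(\<lambda>n. \<rho> (space M) - \<rho> (A n)) \<longlonglongrightarrow> \<rho> (space M) - \<rho> (\<Inter>n. A n)"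
    by simp
  from tendsto_diff[OF tendsto_const[of "\<rho> (space M)"] this] show ?thesis
    by simp
qed

lemma split_unbounded:
  assumes A: "A \<in> sets M" and unbdd: "\<not> bdd_above (\<rho> ` {B\<in>sets M. B \<subseteq> A})"
  obtains B C where "B \<in> sets M" "C \<in> sets M" "B \<inter> C = {}" "B \<subseteq> A" "C \<subseteq> A"
    "1 \<le> \<bar>\<rho> C\<bar>" "\<not> bdd_above (\<rho> ` {X\<in>sets M. X \<subseteq> B})"
proof -
  have "\<not> (\<forall>x\<in>\<rho> ` {B\<in>sets M. B \<subseteq> A}. x \<le> \<bar>\<rho> A\<bar> + 1)"
    using unbdd unfolding bdd_above_def by blast
  then obtain C where C: "C \<in> sets M" "C \<subseteq> A" "\<rho> C > \<bar>\<rho> A\<bar> + 1"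
    by (auto simp: not_le)
  have AC: "A - C \<in> sets M" "\<rho> (A - C) = \<rho> A - \<rho> C"
    using A C by (auto intro: Diff)
  have "\<not> bdd_above (\<rho> ` {X\<in>sets M. X \<subseteq> C}) \<or> \<not> bdd_above (\<rho> ` {X\<in>sets M. X \<subseteq> A - C})"
  proof (rule ccontr)
    assume "\<not> ?thesis"
    then have "bdd_above (\<rho> ` {X\<in>sets M. X \<subseteq> C})" "bdd_above (\<rho> ` {X\<in>sets M. X \<subseteq> A - C})"
      by simp_all
    then obtain s1 s2 where s1: "\<forall>x\<in>\<rho> ` {X\<in>sets M. X \<subseteq> C}. x \<le> s1"
      and s2: "\<forall>x\<in>\<rho> ` {X\<in>sets M. X \<subseteq> A - C}. x \<le> s2"
      unfolding bdd_above_def by blast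
    have "\<rho> X \<le> s1 + s2" if X: "X \<in> sets M" "X \<subseteq> A" for X
    proof -
      have "\<rho> (X \<inter> C) \<le> s1"
        using X C s1 by blast
      moreover have "\<rho> (X - C) \<le> s2"
        using X C s2 by blast
      ultimately show ?thesis
        using Int_Diff[OF X(1) C(1)] by linarith
    qed
    then have "bdd_above (\<rho> ` {B\<in>sets M. B \<subseteq> A})"
      unfolding bdd_above_def by blast
    with unbdd show False
      by blast
  qed
  moreover have "1 \<le> \<bar>\<rho> C\<bar>" "1 \<le> \<bar>\<rho> (A - C)\<bar>"
    using AC(2) C(3) by linarith+
  ultimately show ?thesis
  proof (elim disjE)
    assume "\<not> bdd_above (\<rho> ` {X\<in>sets M. X \<subseteq> C})" "1 \<le> \<bar>\<rho> (A - C)\<bar>"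
    with that[of C "A - C"] C(1,2) AC(1) show ?thesis
      by auto
  next
    assume "\<not> bdd_above (\<rho> ` {X\<in>sets M. X \<subseteq> A - C})" "1 \<le> \<bar>\<rho> C\<bar>"
    with that[of "A - C" C] C(1,2) AC(1) show ?thesis
      by auto
  qed
qed

text \<open>Splitting off, again and again, a piece of absolute value at least \<open>1\<close> would produce a
  disjoint family of sets whose values do not tend to \<open>0\<close>.\<close>
lemma bdd_above: "bdd_above (\<rho> ` sets M)"
proof (rule ccontr)
  let ?U = "\<lambda>A. A \<in> sets M \<and> \<not> bdd_above (\<rho> ` {B\<in>sets M. B \<subseteq> A})"
  let ?P = "\<lambda>C. C \<in> sets M \<and> 1 \<le> \<bar>\<rho> C\<bar>"
  assume "\<not> bdd_above (\<rho> ` sets M)"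
  moreover have "{B\<in>sets M. B \<subseteq> space M} = sets M"
    using sets.sets_into_space by auto
  ultimately have start: "?U (space M)"
    by simp
  have step: "\<exists>B C. ?U B \<and> B \<subseteq> A \<and> C \<subseteq> A \<and> B \<inter> C = {} \<and> ?P C" if A: "?U A" for A
  proof -
    have "A \<in> sets M" "\<not> bdd_above (\<rho> ` {B\<in>sets M. B \<subseteq> A})"
      using A by simp_all
    then obtain B C where "B \<in> sets M" "C \<in> sets M" "B \<inter> C = {}" "B \<subseteq> A" "C \<subseteq> A"
      "1 \<le> \<bar>\<rho> C\<bar>" "\<not> bdd_above (\<rho> ` {X\<in>sets M. X \<subseteq> B})"
      by (rule split_unbounded)
    then show ?thesis
      by (intro exI[of _ B] exI[of _ C]) simp
  qed
  have "\<exists>E :: nat \<Rightarrow> _. disjoint_family E \<and> (\<forall>n. ?P (E n))"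
    using start step by (rule disjoint_family_from_splitting)
  then obtain E :: "nat \<Rightarrow> 'a set" where "disjoint_family E" and E: "\<forall>n. ?P (E n)"
    by blast
  then have "(\<lambda>n. \<rho> (E n)) \<longlonglongrightarrow> 0"
    using sums_Union[of E] E summable_LIMSEQ_zero sums_summable by blast
  then obtain n where "\<bar>\<rho> (E n)\<bar> < 1"
    unfolding lim_sequentially dist_real_def by (metis diff_zero order_refl zero_less_one)
  with E show False
    by (meson not_less)
qed

lemma INT_tail_ge:
  assumes E: "range E \<subseteq> sets M" and near: "\<And>n. \<gamma> - 1 / 2 ^ n < \<rho> (E n)"
    and le: "\<And>X. X \<in> sets M \<Longrightarrow> \<rho> X \<le> \<gamma>"
  shows "\<gamma> - 2 / 2 ^ m \<le> \<rho> (\<Inter>i\<in>{m..}. E i)"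
proof -
  define F where "F n = (\<Inter>i\<in>{m..n}. E i)" for n
  have F: "F n \<in> sets M" if "m \<le> n" for n
    using E that by (auto simp: F_def)
  have F_ge: "\<gamma> - 2 / 2 ^ m + 1 / 2 ^ n \<le> \<rho> (F n)" if "m \<le> n" for n
    using that
  proof (induction rule: dec_induct)
    case base
    with near[of m] show ?case
      by (simp add: F_def field_simps)
  next
    case (step i)
    have F_Suc: "F (Suc i) = F i \<inter> E (Suc i)"
      using \<open>m \<le> i\<close> by (auto simp: F_def le_Suc_eq)
    have Fi: "F i \<in> sets M" and ES: "E (Suc i) \<in> sets M"
      using F \<open>m \<le> i\<close> E by auto
    have "E (Suc i) \<union> F i = E (Suc i) \<union> (F i - E (Suc i))"
      by auto
    then have union: "\<rho> (E (Suc i) \<union> F i) = \<rho> (E (Suc i)) + \<rho> (F i - E (Suc i))"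
      using Un[OF ES sets.Diff[OF Fi ES]] by auto
    have "\<gamma> + (\<gamma> - 2 / 2^m + 1 / 2 ^ Suc i) \<le> (\<gamma> - 1 / 2^Suc i) + (\<gamma> - 2 / 2^m + 1 / 2^i)"
      by (simp add: field_simps)
    also have "\<dots> \<le> \<rho> (E (Suc i)) + \<rho> (F i)"
      using near[of "Suc i"] step.IH by linarith
    also have "\<dots> = \<rho> (E (Suc i) \<union> F i) + \<rho> (F (Suc i))"
      using Int_Diff[OF Fi ES] F_Suc union by simp
    also have "\<dots> \<le> \<gamma> + \<rho> (F (Suc i))"
      using le Fi ES by auto
    finally show ?case
      by simp
  qed
  have "(\<lambda>n. \<rho> (F (n + m))) \<longlonglongrightarrow> \<rho> (\<Inter>n. F (n + m))"
    using F by (intro tendsto_INT) (auto simp: decseq_def F_def)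
  moreover have "(\<Inter>n. F (n + m)) = (\<Inter>i\<in>{m..}. E i)"
    by (fastforce simp: le_iff_add[of m] F_def)
  ultimately have "(\<lambda>n. \<rho> (F n)) \<longlonglongrightarrow> \<rho> (\<Inter>i\<in>{m..}. E i)"
    by (simp add: LIMSEQ_offset[where k=m])
  moreover have "(\<lambda>n. \<gamma> - 2 / 2 ^ m + 1 / 2 ^ n) \<longlonglongrightarrow> \<gamma> - 2 / 2 ^ m + 0"
    by (intro tendsto_add LIMSEQ_divide_realpow_zero tendsto_const) auto
  ultimately show ?thesis
    using F_ge by (intro LIMSEQ_le) auto
qed

lemma Sup_attained: "\<exists>Y\<in>sets M. \<forall>X\<in>sets M. \<rho> X \<le> \<rho> Y"
proof -
  define \<gamma> where "\<gamma> = (SUP X\<in>sets M. \<rho> X)"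
  have le: "\<rho> X \<le> \<gamma>" if "X \<in> sets M" for X
    using bdd_above that by (auto simp: \<gamma>_def intro!: cSUP_upper)
  have "\<exists>X\<in>sets M. \<gamma> - 1 / 2^n < \<rho> X" for n
    unfolding \<gamma>_def using bdd_above by (intro less_cSUP_iff[THEN iffD1]) auto
  then have "\<exists>E. \<forall>n. E n \<in> sets M \<and> \<gamma> - 1 / 2 ^ n < \<rho> (E n)"
    by metis
  then obtain E where E: "range E \<subseteq> sets M" and near: "\<And>n. \<gamma> - 1 / 2 ^ n < \<rho> (E n)"
    by auto
  define Y where "Y = (\<Union>m. \<Inter>i\<in>{m..}. E i)"
  have tails: "(\<Inter>i\<in>{m..}. E i) \<in> sets M" for m
    using E by (intro sets.countable_INT') auto
  then have Y: "Y \<in> sets M"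
    unfolding Y_def by (intro sets.countable_UN') auto
  have lim_Y: "(\<lambda>m. \<rho> (\<Inter>i\<in>{m..}. E i)) \<longlonglongrightarrow> \<rho> Y"
    unfolding Y_def using tails by (intro tendsto_UN) (auto simp: incseq_def)
  have lim_\<gamma>: "(\<lambda>m. \<gamma> - 2 / 2 ^ m) \<longlonglongrightarrow> \<gamma> - 0"
    by (intro tendsto_intros LIMSEQ_divide_realpow_zero) auto
  have "\<gamma> - 0 \<le> \<rho> Y"
    using INT_tail_ge[OF E near le] by (intro LIMSEQ_le[OF lim_\<gamma> lim_Y]) auto
  then have "\<rho> X \<le> \<rho> Y" if "X \<in> sets M" for X
    using le[OF that] by linarith
  with Y show ?thesis
    by blast
qed

text \<open>A set of maximal value is positive for \<open>\<rho>\<close>, its complement is negative.\<close>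
lemma Hahn_decomposition:
  "\<exists>Y\<in>sets M. (\<forall>X\<in>sets M. X \<subseteq> Y \<longrightarrow> 0 \<le> \<rho> X) \<and> (\<forall>X\<in>sets M. X \<inter> Y = {} \<longrightarrow> \<rho> X \<le> 0)"
proof -
  obtain Y where Y: "Y \<in> sets M" and max: "\<And>X. X \<in> sets M \<Longrightarrow> \<rho> X \<le> \<rho> Y"
    using Sup_attained by blast
  have "0 \<le> \<rho> X" if X: "X \<in> sets M" "X \<subseteq> Y" for X
    using Diff[OF Y X] max[OF sets.Diff[OF Y X(1)]] by linarith
  moreover have "\<rho> X \<le> 0" if X: "X \<in> sets M" "X \<inter> Y = {}" for X
  proof -
    have "Y \<inter> X = {}"
      using X(2) by blast
    then show ?thesis
      using Un[OF Y X(1)] max[OF sets.Un[OF Y X(1)]] by linarith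
  qed
  ultimately show ?thesis
    using Y by blast
qed

lemma nonneg_finite_measure:
  assumes nonneg: "\<forall>A\<in>sets M. 0 \<le> \<rho> A"
  shows "\<exists>\<mu>. finite_measure \<mu> \<and> sets \<mu> = sets M \<and> (\<forall>A\<in>sets M. measure \<mu> A = \<rho> A)"
proof (intro exI conjI ballI)
  let ?\<mu> = "measure_of (space M) (sets M) (\<lambda>A. ennreal (\<rho> A))"
  have "countably_additive (sets M) (\<lambda>A. ennreal (\<rho> A))"
    unfolding countably_additive_def
  proof (intro allI impI)
    fix A :: "nat \<Rightarrow> 'a set" assume A: "range A \<subseteq> sets M" "disjoint_family A"
    show "(\<Sum>i. ennreal (\<rho> (A i))) = ennreal (\<rho> (\<Union> (range A)))"
      by (rule suminf_ennreal_eq) (use nonneg A sums_Union[OF A] in auto)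
  qed
  then have emeasure: "emeasure ?\<mu> A = ennreal (\<rho> A)" if "A \<in> sets M" for A
    using that by (intro emeasure_measure_of_sigma sets.sigma_algebra_axioms)
      (auto simp: positive_def empty)
  show "finite_measure ?\<mu>"
    by (rule finite_measureI) (simp add: emeasure)
  show "sets ?\<mu> = sets M"
    by simp
  show "measure ?\<mu> A = \<rho> A" if "A \<in> sets M" for A
    using emeasure[OF that] nonneg that by (simp add: measure_def)
qed

lemma Jordan_decomposition:
  "\<exists>\<mu>p \<mu>n. finite_measure \<mu>p \<and> finite_measure \<mu>n \<and> sets \<mu>p = sets M \<and> sets \<mu>n = sets M
    \<and> (\<forall>A\<in>sets M. \<rho> A = measure \<mu>p A - measure \<mu>n A)"
proof -
  obtain Y where Y: "Y \<in> sets M" and pos: "\<forall>X\<in>sets M. X \<subseteq> Y \<longrightarrow> 0 \<le> \<rho> X"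
    and neg: "\<forall>X\<in>sets M. X \<inter> Y = {} \<longrightarrow> \<rho> X \<le> 0"
    using Hahn_decomposition by (elim bexE conjE)
  interpret inside: real_signed_measure M "\<lambda>A. \<rho> (A \<inter> Y)"
    using Y by (rule restrict)
  interpret outside: real_signed_measure M "\<lambda>A. - \<rho> (A \<inter> (space M - Y))"
    using Y by (intro real_signed_measure.uminus restrict) auto
  have nonneg_in: "\<forall>A\<in>sets M. 0 \<le> \<rho> (A \<inter> Y)"
    using pos Y by blast
  obtain \<mu>p where \<mu>p: "finite_measure \<mu>p" "sets \<mu>p = sets M"
    "\<forall>A\<in>sets M. measure \<mu>p A = \<rho> (A \<inter> Y)"
    using inside.nonneg_finite_measure[OF nonneg_in] by (elim exE conjE)
  have "\<rho> (A \<inter> (space M - Y)) \<le> 0" if "A \<in> sets M" for A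
  proof -
    have "A \<inter> (space M - Y) \<in> sets M" "A \<inter> (space M - Y) \<inter> Y = {}"
      using that Y by auto
    with neg show ?thesis
      by blast
  qed
  then have nonneg_out: "\<forall>A\<in>sets M. 0 \<le> - \<rho> (A \<inter> (space M - Y))"
    by simp
  obtain \<mu>n where \<mu>n: "finite_measure \<mu>n" "sets \<mu>n = sets M"
    "\<forall>A\<in>sets M. measure \<mu>n A = - \<rho> (A \<inter> (space M - Y))"
    using outside.nonneg_finite_measure[OF nonneg_out] by (elim exE conjE)
  have "\<rho> A = measure \<mu>p A - measure \<mu>n A" if A: "A \<in> sets M" for A
  proof -
    have "A \<inter> (space M - Y) = A - Y"
      using sets.sets_into_space[OF A] by blast
    then show ?thesis
      using Int_Diff[OF A Y] \<mu>p(3) \<mu>n(3) A by simp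
  qed
  with \<mu>p(1,2) \<mu>n(1,2) show ?thesis
    by blast
qed

end

section \<open>Signed combinations of finite measures\<close>

text \<open>A finite signed combination \<open>\<Sum> c\<^sub>k \<mu>\<^sub>k\<close> of finite measures, kept as the list of
  pairs \<open>(c\<^sub>k, \<mu>\<^sub>k)\<close> so that no arithmetic on measures is needed.\<close>
type_synonym 'a measure_comb = "(real \<times> 'a measure) list"

definition mcomb_on :: "'a measure \<Rightarrow> 'a measure_comb \<Rightarrow> bool" where
  "mcomb_on M L \<longleftrightarrow> (\<forall>(c, m)\<in>set L. finite_measure m \<and> sets m = sets M)"

definition mcomb_measure :: "'a measure_comb \<Rightarrow> 'a set \<Rightarrow> real" where
  "mcomb_measure L A = (\<Sum>(c, m)\<leftarrow>L. c * measure m A)"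

definition mcomb_integral :: "'a measure_comb \<Rightarrow> ('a \<Rightarrow> real) \<Rightarrow> real" where
  "mcomb_integral L f = (\<Sum>(c, m)\<leftarrow>L. c * integral\<^sup>L m f)"

definition mcomb_mass :: "'a measure_comb \<Rightarrow> real" where
  "mcomb_mass L = (\<Sum>(c, m)\<leftarrow>L. \<bar>c\<bar> * measure m (space m))"

definition mcomb_scale :: "real \<Rightarrow> 'a measure_comb \<Rightarrow> 'a measure_comb" where
  "mcomb_scale r L = map (\<lambda>(c, m). (r * c, m)) L"

lemma mcomb_on_simps [simp]:
  "mcomb_on M []"
  "mcomb_on M ((c, m) # L) \<longleftrightarrow> finite_measure m \<and> sets m = sets M \<and> mcomb_on M L"
  "mcomb_on M (L @ K) \<longleftrightarrow> mcomb_on M L \<and> mcomb_on M K"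
  "mcomb_on M (mcomb_scale r L) \<longleftrightarrow> mcomb_on M L"
  by (auto simp: mcomb_on_def mcomb_scale_def)

lemma mcomb_measure_simps [simp]:
  "mcomb_measure [] A = 0"
  "mcomb_measure ((c, m) # L) A = c * measure m A + mcomb_measure L A"
  "mcomb_measure (L @ K) A = mcomb_measure L A + mcomb_measure K A"
  "mcomb_measure (mcomb_scale r L) A = r * mcomb_measure L A"
  by (induction L) (auto simp: mcomb_measure_def mcomb_scale_def algebra_simps)

lemma mcomb_integral_simps [simp]:
  "mcomb_integral [] f = 0"
  "mcomb_integral ((c, m) # L) f = c * integral\<^sup>L m f + mcomb_integral L f"
  "mcomb_integral (L @ K) f = mcomb_integral L f + mcomb_integral K f"
  "mcomb_integral (mcomb_scale r L) f = r * mcomb_integral L f"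
  by (induction L) (auto simp: mcomb_integral_def mcomb_scale_def algebra_simps)

lemma mcomb_mass_simps [simp]:
  "mcomb_mass [] = 0"
  "mcomb_mass ((c, m) # L) = \<bar>c\<bar> * measure m (space m) + mcomb_mass L"
  by (simp_all add: mcomb_mass_def)

lemma mcomb_mass_nonneg: "0 \<le> mcomb_mass L"
  by (induction L) auto

lemma mcomb_measure_sums:
  assumes "mcomb_on M L" "range A \<subseteq> sets M" "disjoint_family A"
  shows "(\<lambda>n. mcomb_measure L (A n)) sums mcomb_measure L (\<Union>n. A n)"
  using assms(1)
proof (induction L)
  case (Cons p L)
  obtain c m where p: "p = (c, m)"
    by fastforce
  interpret finite_measure m
    using Cons.prems by (simp add: p)
  have "(\<lambda>n. measure m (A n)) sums measure m (\<Union>n. A n)"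
    using Cons.prems assms(2,3) by (intro finite_measure_UNION) (auto simp: p)
  then show ?case
    using Cons by (auto simp: p intro: sums_add sums_mult)
qed simp

definition bounded_measurable :: "'a measure \<Rightarrow> ('a \<Rightarrow> real) \<Rightarrow> bool" where
  "bounded_measurable M f \<longleftrightarrow> f \<in> borel_measurable M \<and> (\<exists>K. \<forall>x\<in>space M. \<bar>f x\<bar> \<le> K)"

lemma bounded_measurable_const: "bounded_measurable M (\<lambda>_. c)"
  by (auto simp: bounded_measurable_def)

lemma bounded_measurable_indicator: "A \<in> sets M \<Longrightarrow> bounded_measurable M (indicator A)"
  by (auto simp: bounded_measurable_def intro!: exI[of _ 1] simp: indicator_def)

lemma bounded_measurable_uminus: "bounded_measurable M f \<Longrightarrow> bounded_measurable M (\<lambda>x. - f x)"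
  by (auto simp: bounded_measurable_def)

lemma bounded_measurable_diff:
  assumes "bounded_measurable M f" "bounded_measurable M g"
  shows "bounded_measurable M (\<lambda>x. f x - g x)"
proof -
  obtain K1 K2 where "\<forall>x\<in>space M. \<bar>f x\<bar> \<le> K1" "\<forall>x\<in>space M. \<bar>g x\<bar> \<le> K2"
    using assms by (auto simp: bounded_measurable_def)
  then have "\<forall>x\<in>space M. \<bar>f x - g x\<bar> \<le> K1 + K2"
    by (auto intro: order_trans[OF abs_triangle_ineq4] add_mono)
  with assms show ?thesis
    by (auto simp: bounded_measurable_def)
qed

lemma bounded_measurable_mult:
  assumes "bounded_measurable M f" "bounded_measurable M g"
  shows "bounded_measurable M (\<lambda>x. f x * g x)"
proof -
  obtain K1 K2 where "\<forall>x\<in>space M. \<bar>f x\<bar> \<le> K1" "\<forall>x\<in>space M. \<bar>g x\<bar> \<le> K2"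
    using assms by (auto simp: bounded_measurable_def)
  then have "\<forall>x\<in>space M. \<bar>f x * g x\<bar> \<le> K1 * K2"
    by (simp add: abs_mult mult_mono')
  with assms show ?thesis
    by (auto simp: bounded_measurable_def)
qed

lemma bounded_measurable_max_0:
  assumes "bounded_measurable M f"
  shows "bounded_measurable M (\<lambda>x. max (f x) 0)"
proof -
  obtain K where "\<forall>x\<in>space M. \<bar>f x\<bar> \<le> K"
    using assms by (auto simp: bounded_measurable_def)
  then have "\<forall>x\<in>space M. \<bar>max (f x) 0\<bar> \<le> K"
    by auto
  with assms show ?thesis
    by (auto simp: bounded_measurable_def)
qed

lemma bounded_measurable_integrable:
  assumes "finite_measure m" "sets m = sets M" "bounded_measurable M f"
  shows "integrable m f"
proof -
  interpret finite_measure m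
    by fact
  obtain K where "\<forall>x\<in>space M. \<bar>f x\<bar> \<le> K" "f \<in> borel_measurable M"
    using assms(3) by (auto simp: bounded_measurable_def)
  moreover have "space m = space M"
    using assms(2) by (rule sets_eq_imp_space_eq)
  ultimately show ?thesis
    using measurable_cong_sets[OF assms(2) refl] by (intro integrable_const_bound[where B=K]) auto
qed

lemma mcomb_integral_indicator:
  assumes "mcomb_on M L" "A \<in> sets M"
  shows "mcomb_integral L (indicator A) = mcomb_measure L A"
  using assms(1) by (induction L) (auto simp: assms(2))

lemma mcomb_integral_cong:
  assumes "mcomb_on M L" "\<And>x. x \<in> space M \<Longrightarrow> f x = g x"
  shows "mcomb_integral L f = mcomb_integral L g"
  using assms(1)
proof (induction L)
  case (Cons p L)
  obtain c m where p: "p = (c, m)"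
    by fastforce
  have "space m = space M"
    using Cons.prems sets_eq_imp_space_eq[of m M] by (simp add: p)
  then have "integral\<^sup>L m f = integral\<^sup>L m g"
    using assms(2) by (intro Bochner_Integration.integral_cong) auto
  with Cons show ?case
    by (simp add: p)
qed simp

lemma mcomb_integral_diff:
  assumes "mcomb_on M L" "bounded_measurable M f" "bounded_measurable M g"
  shows "mcomb_integral L (\<lambda>x. f x - g x) = mcomb_integral L f - mcomb_integral L g"
  using assms(1)
proof (induction L)
  case (Cons p L)
  obtain c m where p: "p = (c, m)"
    by fastforce
  have "integrable m f" "integrable m g"
    using Cons.prems assms(2,3) by (auto simp: p intro: bounded_measurable_integrable)
  with Cons show ?case
    by (simp add: p algebra_simps)
qed simp

lemma mcomb_integral_cmult: "mcomb_integral L (\<lambda>x. r * f x) = r * mcomb_integral L f"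
  by (induction L) (auto simp: algebra_simps)

lemma abs_mcomb_integral_le:
  assumes "mcomb_on M L" "bounded_measurable M f" "\<And>x. x \<in> space M \<Longrightarrow> \<bar>f x\<bar> \<le> K"
  shows "\<bar>mcomb_integral L f\<bar> \<le> K * mcomb_mass L"
  using assms(1)
proof (induction L)
  case (Cons p L)
  obtain c m where p: "p = (c, m)"
    by fastforce
  interpret finite_measure m
    using Cons.prems by (simp add: p)
  have space: "space m = space M"
    using Cons.prems sets_eq_imp_space_eq[of m M] by (simp add: p)
  have f: "integrable m f"
    using Cons.prems assms(2) by (auto simp: p intro: bounded_measurable_integrable)
  have "\<bar>integral\<^sup>L m f\<bar> \<le> (\<integral>x. \<bar>f x\<bar> \<partial>m)"
    using integral_norm_bound[of m f] by simp
  also have "\<dots> \<le> (\<integral>x. K \<partial>m)"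
    using f assms(3) by (intro integral_mono) (auto simp: space)
  finally have "\<bar>integral\<^sup>L m f\<bar> \<le> K * measure m (space m)"
    by (simp add: mult.commute)
  then have "\<bar>c * integral\<^sup>L m f\<bar> \<le> \<bar>c\<bar> * (K * measure m (space m))"
    unfolding abs_mult by (rule mult_left_mono) simp
  then have "\<bar>c * integral\<^sup>L m f\<bar> \<le> K * (\<bar>c\<bar> * measure m (space m))"
    by (simp add: mult.left_commute)
  with Cons show ?case
    by (auto simp: p algebra_simps intro!: order_trans[OF abs_triangle_ineq] add_mono)
qed simp

lemma mcomb_integral_tendsto:
  assumes L: "mcomb_on M L" and s: "\<And>j. s j \<in> borel_measurable M" and f: "f \<in> borel_measurable M"
    and bound: "\<And>j x. x \<in> space M \<Longrightarrow> \<bar>s j x\<bar> \<le> K"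
    and lim: "\<And>x. x \<in> space M \<Longrightarrow> (\<lambda>j. s j x) \<longlonglongrightarrow> f x"
  shows "(\<lambda>j. mcomb_integral L (s j)) \<longlonglongrightarrow> mcomb_integral L f"
  using L
proof (induction L)
  case (Cons p L)
  obtain c m where p: "p = (c, m)"
    by fastforce
  interpret finite_measure m
    using Cons.prems by (simp add: p)
  have sets: "sets m = sets M"
    using Cons.prems by (simp add: p)
  have space: "space m = space M"
    using sets by (rule sets_eq_imp_space_eq)
  have "f \<in> borel_measurable m" "s j \<in> borel_measurable m" for j
    using f s by (simp_all add: measurable_cong_sets[OF sets refl])
  then have "(\<lambda>j. integral\<^sup>L m (s j)) \<longlonglongrightarrow> integral\<^sup>L m f"
    using bound lim by (intro integral_dominated_convergence[where w="\<lambda>_. K"]) (auto simp: space)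
  with Cons show ?case
    by (auto simp: p intro: tendsto_add tendsto_mult_left)
qed simp

lemma abs_floor_mult_divide_le:
  fixes k y :: real
  assumes "k > 0"
  shows "\<bar>real_of_int \<lfloor>k * y\<rfloor> / k - y\<bar> \<le> 1 / k"
proof -
  have "real_of_int \<lfloor>k * y\<rfloor> / k \<le> y"
    using assms by (simp add: divide_le_eq mult.commute)
  moreover have "(k * y - 1) / k \<le> real_of_int \<lfloor>k * y\<rfloor> / k"
    using assms by (intro divide_right_mono) linarith+
  moreover have "(k * y - 1) / k = y - 1 / k"
    using assms by (simp add: field_simps)
  ultimately show ?thesis
    by (simp add: abs_le_iff)
qed

lemma integral_floor_mult_divide:
  fixes f :: "'a \<Rightarrow> real"
  assumes "finite_measure m" "sets m = sets M"
    and f[measurable]: "f \<in> borel_measurable M" and K: "\<And>x. x \<in> space M \<Longrightarrow> \<bar>f x\<bar> \<le> K"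
    and k: "k > 0"
  defines "N \<equiv> \<lceil>k * K\<rceil> + 1"
  shows "integral\<^sup>L m (\<lambda>x. real_of_int \<lfloor>k * f x\<rfloor> / k)
    = (\<Sum>z\<in>{-N..N}. real_of_int z / k * measure m {x\<in>space M. \<lfloor>k * f x\<rfloor> = z})"
proof -
  interpret finite_measure m
    by fact
  define A where "A z = {x\<in>space M. \<lfloor>k * f x\<rfloor> = z}" for z
  have A: "A z \<in> sets m" for z
    using assms(2) unfolding A_def by measurable
  have range: "\<lfloor>k * f x\<rfloor> \<in> {-N..N}" if "x \<in> space M" for x
  proof -
    have "\<bar>k * f x\<bar> \<le> k * K"
      using K[OF that] k by (simp add: abs_mult mult_left_mono)
    then show ?thesis
      unfolding N_def by (simp add: abs_le_iff) linarith
  qed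
  then have "real_of_int \<lfloor>k * f x\<rfloor> / k = (\<Sum>z\<in>{-N..N}. real_of_int z / k * indicator (A z) x)"
    if "x \<in> space m" for x
  proof -
    have x: "x \<in> space M"
      using that sets_eq_imp_space_eq[OF assms(2)] by simp
    then have "(\<Sum>z\<in>{-N..N}. real_of_int z / k * indicator (A z) x)
        = (\<Sum>z\<in>{-N..N}. if \<lfloor>k * f x\<rfloor> = z then real_of_int z / k else 0)"
      by (intro sum.cong) (auto simp: A_def indicator_def)
    also have "\<dots> = real_of_int \<lfloor>k * f x\<rfloor> / k"
      using range[OF x] by (simp add: sum.delta)
    finally show ?thesis
      by simp
  qed
  then have "integral\<^sup>L m (\<lambda>x. real_of_int \<lfloor>k * f x\<rfloor> / k)
      = integral\<^sup>L m (\<lambda>x. \<Sum>z\<in>{-N..N}. real_of_int z / k * indicator (A z) x)"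
    by (rule Bochner_Integration.integral_cong[OF refl])
  also have "\<dots> = (\<Sum>z\<in>{-N..N}. real_of_int z / k * measure m (A z))"
    using A by (simp add: Bochner_Integration.integral_sum emeasure_eq_measure)
  finally show ?thesis
    by (simp add: A_def)
qed

lemma mcomb_integral_floor_mult_divide:
  fixes f :: "'a \<Rightarrow> real"
  assumes L: "mcomb_on M L" and f: "f \<in> borel_measurable M" "\<And>x. x \<in> space M \<Longrightarrow> \<bar>f x\<bar> \<le> K"
    and k: "k > 0"
  defines "N \<equiv> \<lceil>k * K\<rceil> + 1"
  shows "mcomb_integral L (\<lambda>x. real_of_int \<lfloor>k * f x\<rfloor> / k)
    = (\<Sum>z\<in>{-N..N}. real_of_int z / k * mcomb_measure L {x\<in>space M. \<lfloor>k * f x\<rfloor> = z})"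
  using L
proof (induction L)
  case (Cons p L)
  obtain c m where p: "p = (c, m)"
    by fastforce
  have "integral\<^sup>L m (\<lambda>x. real_of_int \<lfloor>k * f x\<rfloor> / k)
    = (\<Sum>z\<in>{-N..N}. real_of_int z / k * measure m {x\<in>space M. \<lfloor>k * f x\<rfloor> = z})"
    unfolding N_def using Cons.prems f k by (intro integral_floor_mult_divide) (auto simp: p)
  with Cons show ?case
    by (simp add: p sum_distrib_left sum.distrib algebra_simps)
qed simp

text \<open>On the step functions \<open>\<lfloor>k f\<rfloor> / k\<close> the integral is a combination of values on sets,
  and they converge boundedly to \<open>f\<close>.\<close>
lemma mcomb_integral_eq_0:
  fixes f :: "'a \<Rightarrow> real"
  assumes L: "mcomb_on M L" and zero: "\<And>A. A \<in> sets M \<Longrightarrow> mcomb_measure L A = 0"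
    and f: "bounded_measurable M f"
  shows "mcomb_integral L f = 0"
proof -
  obtain K where f_meas[measurable]: "f \<in> borel_measurable M" and K: "\<And>x. x \<in> space M \<Longrightarrow> \<bar>f x\<bar> \<le> K"
    using f by (auto simp: bounded_measurable_def)
  define s where "s j x = real_of_int \<lfloor>real (Suc j) * f x\<rfloor> / real (Suc j)" for j x
  have s_close: "\<bar>s j x - f x\<bar> \<le> 1 / real (Suc j)" for j x
    unfolding s_def by (rule abs_floor_mult_divide_le) simp
  have "(\<lambda>j. mcomb_integral L (s j)) \<longlonglongrightarrow> mcomb_integral L f"
  proof (rule mcomb_integral_tendsto[OF L _ f_meas])
    show "s j \<in> borel_measurable M" for j
      unfolding s_def by measurable
    show "\<bar>s j x\<bar> \<le> K + 1" if "x \<in> space M" for j x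
    proof -
      have "1 / real (Suc j) \<le> 1"
        by simp
      then show ?thesis
        using s_close[of j x] K[OF that] by linarith
    qed
    show "(\<lambda>j. s j x) \<longlonglongrightarrow> f x" for x
    proof -
      have "(\<lambda>j. s j x - f x) \<longlonglongrightarrow> 0"
        using s_close by (intro Lim_null_comparison[OF _ LIMSEQ_Suc[OF lim_const_over_n[of 1]]]) simp
      then show ?thesis
        by (simp add: LIM_zero_iff)
    qed
  qed
  moreover have "mcomb_integral L (s j) = 0" for j
  proof -
    have "{x\<in>space M. \<lfloor>real (Suc j) * f x\<rfloor> = z} \<in> sets M" for z
      by measurable
    then show ?thesis
      unfolding s_def using mcomb_integral_floor_mult_divide[OF L f_meas K, of "real (Suc j)"] zero
      by simp
  qed
  ultimately have "(\<lambda>j. 0) \<longlonglongrightarrow> mcomb_integral L f"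
    by simp
  then show ?thesis
    by (simp add: LIMSEQ_const_iff)
qed

definition mcomb_density :: "('a \<Rightarrow> real) \<Rightarrow> 'a measure_comb \<Rightarrow> 'a measure_comb" where
  "mcomb_density \<psi> L = map (\<lambda>(c, m). (c, density m (\<lambda>x. ennreal (\<psi> x)))) L"

lemma finite_measure_density_bounded:
  assumes "finite_measure m" "sets m = sets M" "bounded_measurable M \<psi>" "\<And>x. 0 \<le> \<psi> x"
  shows "finite_measure (density m (\<lambda>x. ennreal (\<psi> x)))"
proof (rule finite_measureI)
  interpret finite_measure m
    by fact
  have "\<psi> \<in> borel_measurable M"
    using assms(3) by (simp add: bounded_measurable_def)
  then have \<psi>: "\<psi> \<in> borel_measurable m"
    unfolding measurable_cong_sets[OF assms(2) refl] .
  have "emeasure (density m (\<lambda>x. ennreal (\<psi> x))) (space m) = (\<integral>\<^sup>+x. ennreal (\<psi> x) * indicator (space m) x \<partial>m)"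
    using \<psi> by (simp add: emeasure_density)
  also have "\<dots> = (\<integral>\<^sup>+x. ennreal (\<psi> x) \<partial>m)"
    by (rule nn_integral_cong) simp
  also have "\<dots> = ennreal (\<integral>x. \<psi> x \<partial>m)"
    using assms by (intro nn_integral_eq_integral bounded_measurable_integrable) auto
  finally show "emeasure (density m (\<lambda>x. ennreal (\<psi> x))) (space (density m (\<lambda>x. ennreal (\<psi> x)))) \<noteq> \<infinity>"
    by simp
qed

lemma mcomb_on_density:
  assumes "mcomb_on M L" "bounded_measurable M \<psi>" "\<And>x. 0 \<le> \<psi> x"
  shows "mcomb_on M (mcomb_density \<psi> L)"
  using assms(1) unfolding mcomb_on_def mcomb_density_def
  by (auto intro: finite_measure_density_bounded[OF _ _ assms(2,3)])

lemma mcomb_integral_density: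
  assumes "mcomb_on M L" "\<psi> \<in> borel_measurable M" "\<And>x. 0 \<le> \<psi> x" "g \<in> borel_measurable M"
  shows "mcomb_integral (mcomb_density \<psi> L) g = mcomb_integral L (\<lambda>x. \<psi> x * g x)"
  using assms(1)
proof (induction L)
  case (Cons p L)
  obtain c m where p: "p = (c, m)"
    by fastforce
  have "sets m = sets M"
    using Cons.prems by (simp add: p)
  then have "\<psi> \<in> borel_measurable m" "g \<in> borel_measurable m"
    using assms(2,4) unfolding measurable_cong_sets[OF \<open>sets m = sets M\<close> refl] by auto
  then have "(\<integral>x. g x \<partial>density m (\<lambda>x. ennreal (\<psi> x))) = (\<integral>x. \<psi> x * g x \<partial>m)"
    using assms(3) by (intro integral_real_density) simp_all
  with Cons show ?case
    by (simp add: p mcomb_density_def)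
qed (simp add: mcomb_density_def)

text \<open>\<open>density\<close> only takes nonnegative densities, hence the split of \<open>\<phi>\<close> into positive
  and negative parts.\<close>
definition mcomb_mult :: "('a \<Rightarrow> real) \<Rightarrow> 'a measure_comb \<Rightarrow> 'a measure_comb" where
  "mcomb_mult \<phi> L =
    mcomb_density (\<lambda>x. max (\<phi> x) 0) L @ mcomb_scale (-1) (mcomb_density (\<lambda>x. max (- \<phi> x) 0) L)"

lemma mcomb_on_mult: "mcomb_on M L \<Longrightarrow> bounded_measurable M \<phi> \<Longrightarrow> mcomb_on M (mcomb_mult \<phi> L)"
  by (simp add: mcomb_mult_def mcomb_on_density bounded_measurable_max_0 bounded_measurable_uminus)

lemma mcomb_integral_mult:
  assumes L: "mcomb_on M L" and \<phi>: "bounded_measurable M \<phi>" and g: "bounded_measurable M g"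
  shows "mcomb_integral (mcomb_mult \<phi> L) g = mcomb_integral L (\<lambda>x. \<phi> x * g x)"
proof -
  let ?pos = "\<lambda>x. max (\<phi> x) 0" and ?neg = "\<lambda>x. max (- \<phi> x) 0"
  have pos: "bounded_measurable M ?pos" and neg: "bounded_measurable M ?neg"
    using \<phi> by (simp_all add: bounded_measurable_max_0 bounded_measurable_uminus)
  have "mcomb_integral (mcomb_mult \<phi> L) g
      = mcomb_integral L (\<lambda>x. ?pos x * g x) - mcomb_integral L (\<lambda>x. ?neg x * g x)"
    using L pos neg g by (simp add: mcomb_mult_def mcomb_integral_density bounded_measurable_def)
  also have "\<dots> = mcomb_integral L (\<lambda>x. ?pos x * g x - ?neg x * g x)"
    using L pos neg g by (simp add: mcomb_integral_diff bounded_measurable_mult)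
  also have "(\<lambda>x. ?pos x * g x - ?neg x * g x) = (\<lambda>x. \<phi> x * g x)"
    by (auto simp: fun_eq_iff max_def algebra_simps)
  finally show ?thesis .
qed

section \<open>Polynomials in the coordinates\<close>

text \<open>A polynomial in the coordinates is a list of terms \<open>(c, L)\<close>, each standing for
  \<open>c\<close> times the product of the coordinates listed in \<open>L\<close> (with multiplicity).\<close>
type_synonym 'i cpoly = "(real \<times> 'i list) list"

definition cpoly_eval :: "'i cpoly \<Rightarrow> ('i \<Rightarrow> real) \<Rightarrow> real" where
  "cpoly_eval ps \<theta> = (\<Sum>(c, L)\<leftarrow>ps. c * prod_list (map \<theta> L))"

definition cpoly_mult :: "'i cpoly \<Rightarrow> 'i cpoly \<Rightarrow> 'i cpoly" where
  "cpoly_mult ps qs = concat (map (\<lambda>(c, L). map (\<lambda>(d, K). (c * d, L @ K)) qs) ps)"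

definition cpoly_scale :: "real \<Rightarrow> 'i cpoly \<Rightarrow> 'i cpoly" where
  "cpoly_scale r ps = map (\<lambda>(c, L). (r * c, L)) ps"

definition cpoly_deriv :: "'i \<Rightarrow> 'i cpoly \<Rightarrow> 'i cpoly" where
  "cpoly_deriv i ps = map (\<lambda>(c, L). (c * real (count_list L i), remove1 i L)) ps"

definition cpoly_antideriv :: "'i \<Rightarrow> 'i cpoly \<Rightarrow> 'i cpoly" where
  "cpoly_antideriv i ps = map (\<lambda>(c, L). (c / real (count_list L i + 1), i # L)) ps"

definition cpoly_drop :: "'i \<Rightarrow> 'i cpoly \<Rightarrow> 'i cpoly" where
  "cpoly_drop i ps = filter (\<lambda>(c, L). i \<notin> set L) ps"

lemma cpoly_eval_Nil [simp]: "cpoly_eval [] \<theta> = 0"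
  and cpoly_eval_Cons [simp]: "cpoly_eval ((c, L) # ps) \<theta> = c * prod_list (map \<theta> L) + cpoly_eval ps \<theta>"
  and cpoly_eval_append [simp]: "cpoly_eval (ps @ qs) \<theta> = cpoly_eval ps \<theta> + cpoly_eval qs \<theta>"
  by (simp_all add: cpoly_eval_def)

lemma cpoly_eval_mult [simp]: "cpoly_eval (cpoly_mult ps qs) \<theta> = cpoly_eval ps \<theta> * cpoly_eval qs \<theta>"
proof (induction ps)
  case (Cons p ps)
  obtain c L where p: "p = (c, L)"
    by fastforce
  have "cpoly_eval (map (\<lambda>(d, K). (c * d, L @ K)) qs) \<theta> = c * prod_list (map \<theta> L) * cpoly_eval qs \<theta>"
    by (induction qs) (auto simp: algebra_simps)
  with Cons show ?case
    by (simp add: cpoly_mult_def p algebra_simps)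
qed (simp add: cpoly_mult_def)

lemma cpoly_eval_scale [simp]: "cpoly_eval (cpoly_scale r ps) \<theta> = r * cpoly_eval ps \<theta>"
  by (induction ps) (auto simp: cpoly_scale_def algebra_simps)

lemma cpoly_deriv_append [simp]: "cpoly_deriv i (ps @ qs) = cpoly_deriv i ps @ cpoly_deriv i qs"
  by (simp add: cpoly_deriv_def)

lemma cpoly_deriv_antideriv [simp]: "cpoly_deriv i (cpoly_antideriv i ps) = ps"
  by (induction ps) (auto simp: cpoly_deriv_def cpoly_antideriv_def)

lemma cpoly_eval_deriv_scale:
  "cpoly_eval (cpoly_deriv i (cpoly_scale r ps)) \<theta> = r * cpoly_eval (cpoly_deriv i ps) \<theta>"
  by (induction ps) (auto simp: cpoly_deriv_def cpoly_scale_def algebra_simps)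

lemma prod_list_map_remove1:
  fixes \<theta> :: "'i \<Rightarrow> real"
  shows "i \<in> set L \<Longrightarrow> prod_list (map \<theta> L) = \<theta> i * prod_list (map \<theta> (remove1 i L))"
proof (induction L)
  case (Cons a L)
  then show ?case
    by (cases "a = i") (auto simp: mult.left_commute[of "\<theta> a"])
qed simp

lemma has_real_derivative_monomial:
  "((\<lambda>t. prod_list (map (\<theta>(i := t)) L)) has_real_derivative
      real (count_list L i) * prod_list (map (\<theta>(i := t)) (remove1 i L))) (at t)"
proof (induction L)
  case (Cons j L)
  show ?case
  proof (cases "j = i")
    case True
    have "((\<lambda>t. t * prod_list (map (\<theta>(i := t)) L)) has_real_derivative
        1 * prod_list (map (\<theta>(i := t)) L) + t * (real (count_list L i) * prod_list (map (\<theta>(i := t)) (remove1 i L))))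
        (at t)"
      by (rule DERIV_cong[OF DERIV_mult'[OF DERIV_ident Cons]]) (simp add: algebra_simps del: fun_upd_apply)
    moreover have "1 * prod_list (map (\<theta>(i := t)) L) + t * (real (count_list L i) * prod_list (map (\<theta>(i := t)) (remove1 i L)))
        = real (count_list (j # L) i) * prod_list (map (\<theta>(i := t)) (remove1 i (j # L)))"
    proof (cases "i \<in> set L")
      case True
      then show ?thesis
        using \<open>j = i\<close> prod_list_map_remove1[OF True, of "\<theta>(i := t)"] by (simp add: algebra_simps)
    next
      case False
      then show ?thesis
        using \<open>j = i\<close> by (simp add: count_list_0_iff)
    qed
    moreover have "(\<lambda>t. prod_list (map (\<theta>(i := t)) (j # L))) = (\<lambda>t. t * prod_list (map (\<theta>(i := t)) L))"
      using True by simp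
    ultimately show ?thesis
      by (metis (no_types, lifting) DERIV_cong)
  next
    case False
    have "((\<lambda>t. \<theta> j * prod_list (map (\<theta>(i := t)) L)) has_real_derivative
        \<theta> j * (real (count_list L i) * prod_list (map (\<theta>(i := t)) (remove1 i L)))) (at t)"
      by (rule DERIV_cmult[OF Cons])
    moreover have "(\<lambda>t. prod_list (map (\<theta>(i := t)) (j # L))) = (\<lambda>t. \<theta> j * prod_list (map (\<theta>(i := t)) L))"
      using False by simp
    moreover have "real (count_list (j # L) i) * prod_list (map (\<theta>(i := t)) (remove1 i (j # L)))
        = \<theta> j * (real (count_list L i) * prod_list (map (\<theta>(i := t)) (remove1 i L)))"
      using False by (simp add: algebra_simps)
    ultimately show ?thesis
      by (metis (no_types, lifting) DERIV_cong)
  qed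
qed (auto intro!: derivative_eq_intros)

lemma has_real_derivative_cpoly_eval:
  "((\<lambda>t. cpoly_eval ps (\<theta>(i := t))) has_real_derivative cpoly_eval (cpoly_deriv i ps) (\<theta>(i := t))) (at t)"
proof (induction ps)
  case (Cons p ps)
  obtain c L where p: "p = (c, L)"
    by fastforce
  have "((\<lambda>t. c * prod_list (map (\<theta>(i := t)) L) + cpoly_eval ps (\<theta>(i := t))) has_real_derivative
      c * (real (count_list L i) * prod_list (map (\<theta>(i := t)) (remove1 i L)))
        + cpoly_eval (cpoly_deriv i ps) (\<theta>(i := t))) (at t)"
    by (intro DERIV_add DERIV_cmult has_real_derivative_monomial Cons)
  then show ?case
    unfolding p cpoly_eval_Cons by (rule DERIV_cong) (simp add: cpoly_deriv_def del: fun_upd_apply)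
qed (simp add: cpoly_deriv_def)

lemma cpoly_eval_drop: "cpoly_eval (cpoly_drop i ps) \<theta> = cpoly_eval ps (\<theta>(i := 0))"
proof (induction ps)
  case (Cons p ps)
  obtain c L where p: "p = (c, L)"
    by fastforce
  have "i \<notin> set L \<Longrightarrow> prod_list (map (\<theta>(i := 0)) L) = prod_list (map \<theta> L)"
    by (induction L) auto
  moreover have "i \<in> set L \<Longrightarrow> prod_list (map (\<theta>(i := 0)) L) = 0"
    using prod_list_map_remove1[of i L "\<theta>(i := 0)"] by simp
  ultimately show ?case
    using Cons by (cases "i \<in> set L") (auto simp: cpoly_drop_def p simp del: fun_upd_apply)
qed (simp add: cpoly_drop_def)

lemma cpoly_eval_deriv_drop: "cpoly_eval (cpoly_deriv i (cpoly_drop i ps)) \<theta> = 0"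
  by (induction ps) (auto simp: cpoly_deriv_def cpoly_drop_def count_list_0_iff)

lemma cpoly_eval_antideriv_0: "cpoly_eval (cpoly_antideriv i ps) (\<theta>(i := 0)) = 0"
  by (induction ps) (auto simp: cpoly_antideriv_def)

lemma cpoly_eval_cong:
  assumes "\<And>j. j \<in> (\<Union>(c, L)\<in>set ps. set L) \<Longrightarrow> \<theta> j = \<theta>' j"
  shows "cpoly_eval ps \<theta> = cpoly_eval ps \<theta>'"
  using assms
proof (induction ps)
  case (Cons p ps)
  obtain c L where p: "p = (c, L)"
    by fastforce
  have "map \<theta> L = map \<theta>' L"
    using Cons.prems by (auto simp: p)
  then have "prod_list (map \<theta> L) = prod_list (map \<theta>' L)"
    by (rule arg_cong)
  with Cons show ?case
    by (simp add: p)
qed simp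

lemma local_fun_cpoly_eval: "local_fun (cpoly_eval ps)"
  unfolding local_fun_def
  by (rule exI[of _ "\<Union>(c, L)\<in>set ps. set L"]) (auto intro: cpoly_eval_cong)

lemma continuous_on_cpoly_eval: "continuous_on UNIV (cpoly_eval ps)"
proof (induction ps)
  case (Cons p ps)
  obtain c L where p: "p = (c, L)"
    by fastforce
  have "continuous_on UNIV (\<lambda>\<theta>::'a \<Rightarrow> real. prod_list (map \<theta> L))"
    by (induction L) (auto intro!: continuous_on_mult continuous_on_product_coordinates)
  then have "continuous_on UNIV (\<lambda>\<theta>::'a \<Rightarrow> real. c * prod_list (map \<theta> L) + cpoly_eval ps \<theta>)"
    by (intro continuous_on_add continuous_on_mult continuous_on_const Cons.IH)
  then show ?case
    by (simp add: p)
qed simp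

section \<open>Calculus and measurability on \<open>Theta\<close>\<close>

lemma at_within_01_nontrivial: "x \<in> {0..1::real} \<Longrightarrow> at x within {0..1} \<noteq> bot"
  using islimpt_closure_open[where s="{0<..<1::real}" and x=x]
  by (auto simp: trivial_limit_within)

lemma zero_in_Theta: "(\<lambda>_. 0) \<in> Theta"
  by (simp add: Theta_def)

lemma Theta_coord_01: "\<theta> \<in> Theta \<Longrightarrow> \<theta> i \<in> {0..1}"
  by (simp add: Theta_def)

lemma fun_upd_in_Theta: "\<theta> \<in> Theta \<Longrightarrow> t \<in> {0..1} \<Longrightarrow> \<theta>(i := t) \<in> Theta"
  by (simp add: Theta_def)

lemma space_ThetaM: "space ThetaM = Theta"
  by (auto simp: ThetaM_def Theta_def space_PiM PiE_def extensional_def)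

lemma partial_eqI:
  assumes "\<theta> \<in> Theta" "((\<lambda>t. f (\<theta>(i := t))) has_real_derivative D) (at (\<theta> i) within {0..1})"
  shows "partial i f \<theta> = D"
proof -
  have "((\<lambda>t. f (\<theta>(i := t))) has_real_derivative partial i f \<theta>) (at (\<theta> i) within {0..1})"
    unfolding partial_def by (rule someI[of _ D]) (rule assms(2))
  then show ?thesis
    using has_field_derivative_unique[OF _ assms(2) at_within_01_nontrivial[OF Theta_coord_01[OF assms(1)]]]
    by blast
qed

lemma has_real_derivative_partial:
  assumes "has_partial i f" "\<theta> \<in> Theta"
  shows "((\<lambda>t. f (\<theta>(i := t))) has_real_derivative partial i f \<theta>) (at (\<theta> i) within {0..1})"
proof -
  obtain D where "((\<lambda>t. f (\<theta>(i := t))) has_real_derivative D) (at (\<theta> i) within {0..1})"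
    using assms by (auto simp: has_partial_def real_differentiable_def)
  then show ?thesis
    using partial_eqI[OF assms(2)] by simp
qed

lemma has_partialI:
  assumes "\<And>\<theta>. \<theta> \<in> Theta \<Longrightarrow> ((\<lambda>t. f (\<theta>(i := t))) has_real_derivative D \<theta>) (at (\<theta> i) within {0..1})"
  shows "has_partial i f"
  using assms by (auto simp: has_partial_def real_differentiable_def)

lemma Ck_cong: "(\<And>\<theta>. \<theta> \<in> Theta \<Longrightarrow> f \<theta> = g \<theta>) \<Longrightarrow> Ck k f = Ck k g"
proof (induction k arbitrary: f g)
  case 0
  then show ?case
    unfolding Ck.simps by (rule continuous_on_cong[OF refl])
next
  case (Suc k)
  have deriv: "((\<lambda>t. f (\<theta>(i := t))) has_real_derivative D) (at (\<theta> i) within {0..1}) \<longleftrightarrow>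
      ((\<lambda>t. g (\<theta>(i := t))) has_real_derivative D) (at (\<theta> i) within {0..1})" if "\<theta> \<in> Theta" for \<theta> i D
    using Suc.prems[OF fun_upd_in_Theta[OF that]]
    by (intro has_field_derivative_cong_ev[OF refl _ refl refl Theta_coord_01[OF that]] always_eventually)
      (auto simp del: fun_upd_apply)
  have "has_partial i f = has_partial i g" for i
    unfolding has_partial_def real_differentiable_def by (intro ball_cong refl ex_cong1 deriv)
  moreover have "partial i f \<theta> = partial i g \<theta>" if "\<theta> \<in> Theta" for i \<theta>
    unfolding partial_def by (rule arg_cong[where f=Eps]) (rule ext, rule deriv[OF that])
  then have "Ck k (partial i f) = Ck k (partial i g)" for i
    by (rule Suc.IH)
  moreover have "continuous_on Theta f = continuous_on Theta g"
    by (rule continuous_on_cong[OF refl Suc.prems])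
  ultimately show ?case
    unfolding Ck.simps by presburger
qed

lemma partial_cpoly_eval: "\<theta> \<in> Theta \<Longrightarrow> partial i (cpoly_eval ps) \<theta> = cpoly_eval (cpoly_deriv i ps) \<theta>"
  using has_field_derivative_at_within[OF has_real_derivative_cpoly_eval[of ps \<theta> i "\<theta> i"]]
  by (intro partial_eqI) simp_all

lemma Ck_cpoly_eval:
  fixes ps :: "(int^'d::finite) cpoly"
  shows "Ck k (cpoly_eval ps)"
proof (induction k arbitrary: ps)
  case 0
  then show ?case
    using continuous_on_subset[OF continuous_on_cpoly_eval subset_UNIV] by simp
next
  case (Suc k)
  have "Ck k (partial i (cpoly_eval ps))" for i
    using Suc.IH Ck_cong[of "partial i (cpoly_eval ps)" "cpoly_eval (cpoly_deriv i ps)" k]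
    by (simp add: partial_cpoly_eval)
  moreover have "has_partial i (cpoly_eval ps)" for i
  proof (rule has_partialI)
    fix \<theta> :: "int^'d \<Rightarrow> real"
    show "((\<lambda>t. cpoly_eval ps (\<theta>(i := t))) has_real_derivative cpoly_eval (cpoly_deriv i ps) \<theta>)
        (at (\<theta> i) within {0..1})"
      using has_field_derivative_at_within[OF has_real_derivative_cpoly_eval[of ps \<theta> i "\<theta> i"]] by simp
  qed
  ultimately show ?case
    using continuous_on_subset[OF continuous_on_cpoly_eval subset_UNIV] by simp
qed

lemma smooth_cpoly_eval: "smooth (cpoly_eval ps)"
  unfolding smooth_def using Ck_cpoly_eval by blast

lemma coord_measurable: "(\<lambda>\<theta>. \<theta> j) \<in> borel_measurable ThetaM"
proof -
  have "(\<lambda>\<theta>. \<theta> j) \<in> measurable ThetaM (restrict_space borel {0..1::real})"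
    unfolding ThetaM_def by (rule measurable_component_singleton) simp
  then show ?thesis
    by (simp add: measurable_restrict_space2_iff)
qed

lemma cpoly_eval_measurable: "cpoly_eval ps \<in> borel_measurable ThetaM"
proof (induction ps)
  case (Cons p ps)
  obtain c L where p: "p = (c, L)"
    by fastforce
  have "(\<lambda>\<theta>. prod_list (map \<theta> L)) \<in> borel_measurable ThetaM"
    by (induction L) (simp_all add: borel_measurable_times coord_measurable)
  with Cons show ?case
    by (simp add: p)
qed simp

lemma compact_Theta: "compact (Theta :: (int^'d::finite \<Rightarrow> real) set)"
proof -
  have "(Theta :: (int^'d \<Rightarrow> real) set) = PiE UNIV (\<lambda>_. {0..1})"
    by (auto simp: Theta_def PiE_def extensional_def)
  moreover have "compactin (product_topology (\<lambda>_. euclidean) UNIV) (PiE UNIV (\<lambda>_::int^'d. {0..1::real}))"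
    by (simp add: compactin_PiE compact_Icc)
  ultimately show ?thesis
    by (simp add: euclidean_product_topology)
qed

text \<open>Stone--Weierstrass: polynomials in the coordinates separate the points of the compact
  space \<open>Theta\<close>.\<close>
lemma cpoly_approximation:
  fixes f :: "(int^'d::finite \<Rightarrow> real) \<Rightarrow> real"
  assumes "continuous_on Theta f" "e > 0"
  shows "\<exists>ps. \<forall>\<theta>\<in>Theta. \<bar>f \<theta> - cpoly_eval ps \<theta>\<bar> < e"
proof -
  interpret function_ring_on "range cpoly_eval" "Theta :: (int^'d \<Rightarrow> real) set"
  proof
    show "compact (Theta :: (int^'d \<Rightarrow> real) set)"
      by (rule compact_Theta)
  next
    fix f :: "(int^'d \<Rightarrow> real) \<Rightarrow> real"
    assume "f \<in> range cpoly_eval"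
    then show "continuous_on Theta f"
      using continuous_on_cpoly_eval continuous_on_subset by blast
  next
    fix f g :: "(int^'d \<Rightarrow> real) \<Rightarrow> real"
    assume "f \<in> range cpoly_eval" "g \<in> range cpoly_eval"
    then obtain ps qs where "f = cpoly_eval ps" "g = cpoly_eval qs"
      by blast
    moreover have "(\<lambda>x. cpoly_eval ps x + cpoly_eval qs x) = cpoly_eval (ps @ qs)"
      "(\<lambda>x. cpoly_eval ps x * cpoly_eval qs x) = cpoly_eval (cpoly_mult ps qs)"
      by (auto simp: fun_eq_iff)
    ultimately show "(\<lambda>x. f x + g x) \<in> range cpoly_eval" "(\<lambda>x. f x * g x) \<in> range cpoly_eval"
      by simp_all
  next
    fix c :: real
    show "(\<lambda>_. c) \<in> range cpoly_eval"
      by (rule range_eqI[where x="[(c, [])]"]) (simp add: fun_eq_iff)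
  next
    fix x y :: "int^'d \<Rightarrow> real"
    assume "x \<noteq> y"
    then obtain j where "x j \<noteq> y j"
      by blast
    then show "\<exists>f\<in>range cpoly_eval. f x \<noteq> f y"
      by (intro bexI[of _ "cpoly_eval [(1, [j])]"]) simp_all
  qed
  obtain F where F: "F \<in> UNIV \<rightarrow> range cpoly_eval" and lim: "uniform_limit Theta F f sequentially"
    using Stone_Weierstrass[OF assms(1)] by blast
  then obtain n where n: "\<forall>x\<in>Theta. dist (F n x) (f x) < e"
    using assms(2) unfolding uniform_limit_iff eventually_sequentially by blast
  obtain ps where "F n = cpoly_eval ps"
    using F by blast
  with n show ?thesis
    by (auto simp: dist_real_def abs_minus_commute)
qed

lemma continuous_on_Theta_bounded:
  fixes f :: "(int^'d::finite \<Rightarrow> real) \<Rightarrow> real"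
  assumes "continuous_on Theta f"
  shows "\<exists>K. \<forall>x\<in>Theta. \<bar>f x\<bar> \<le> K"
  using compact_imp_bounded[OF compact_continuous_image[OF assms compact_Theta]]
  by (auto simp: bounded_iff)

lemma continuous_on_Theta_measurable:
  fixes f :: "(int^'d::finite \<Rightarrow> real) \<Rightarrow> real"
  assumes "continuous_on Theta f"
  shows "f \<in> borel_measurable ThetaM"
proof -
  have "\<forall>n. \<exists>ps. \<forall>\<theta>\<in>Theta. \<bar>f \<theta> - cpoly_eval ps \<theta>\<bar> < 1 / real (Suc n)"
    using cpoly_approximation[OF assms] by simp
  then obtain P where P: "\<And>n \<theta>. \<theta> \<in> Theta \<Longrightarrow> \<bar>f \<theta> - cpoly_eval (P n) \<theta>\<bar> < 1 / real (Suc n)"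
    by metis
  show ?thesis
  proof (rule borel_measurable_LIMSEQ_real[where u="\<lambda>n. cpoly_eval (P n)"])
    fix x :: "int^'d \<Rightarrow> real" assume x: "x \<in> space ThetaM"
    have "(\<lambda>n. cpoly_eval (P n) x - f x) \<longlonglongrightarrow> 0"
    proof (rule Lim_null_comparison)
      show "\<forall>\<^sub>F n in sequentially. norm (cpoly_eval (P n) x - f x) \<le> 1 / real (Suc n)"
        using P[of x] x by (auto simp: space_ThetaM abs_minus_commute less_imp_le)
      show "(\<lambda>n. 1 / real (Suc n)) \<longlonglongrightarrow> 0"
        by (rule LIMSEQ_Suc[OF lim_const_over_n])
    qed
    then show "(\<lambda>n. cpoly_eval (P n) x) \<longlonglongrightarrow> f x"
      by (simp add: LIM_zero_iff)
  qed (rule cpoly_eval_measurable)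
qed

lemma continuous_on_Theta_bounded_measurable:
  "continuous_on Theta f \<Longrightarrow> bounded_measurable ThetaM f"
  unfolding bounded_measurable_def space_ThetaM
  using continuous_on_Theta_measurable continuous_on_Theta_bounded by blast

section \<open>Complex measures on \<open>Theta\<close>\<close>

lemma mcomb_measure_empty [simp]: "mcomb_measure L {} = 0"
  by (induction L) auto

definition cm_represents ::
    "((int^'d::finite \<Rightarrow> real) set \<Rightarrow> complex) \<Rightarrow> (int^'d \<Rightarrow> real) measure_comb \<Rightarrow> (int^'d \<Rightarrow> real) measure_comb \<Rightarrow> bool"
  where "cm_represents \<nu> L1 L2 \<longleftrightarrow> mcomb_on ThetaM L1 \<and> mcomb_on ThetaM L2 \<and>
    (\<forall>A\<in>sets ThetaM. \<nu> A = complex_of_real (mcomb_measure L1 A) + \<i> * complex_of_real (mcomb_measure L2 A))"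

lemma complex_measure_Jordan_decomposition:
  assumes "complex_measure \<nu>"
  shows "\<exists>\<mu>1 \<mu>2 \<mu>3 \<mu>4. (\<forall>\<mu>\<in>{\<mu>1, \<mu>2, \<mu>3, \<mu>4}. finite_measure \<mu> \<and> sets \<mu> = sets ThetaM) \<and>
    (\<forall>A\<in>sets ThetaM. \<nu> A = complex_of_real (measure \<mu>1 A - measure \<mu>2 A)
                            + \<i> * complex_of_real (measure \<mu>3 A - measure \<mu>4 A))"
proof -
  have sums: "(\<lambda>n. \<nu> (A n)) sums \<nu> (\<Union>n. A n)" if "range A \<subseteq> sets ThetaM" "disjoint_family A" for A
    using assms that unfolding complex_measure_def by blast
  have empty: "\<nu> {} = 0"
    using assms unfolding complex_measure_def by blast
  interpret Re: real_signed_measure ThetaM "\<lambda>A. Re (\<nu> A)"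
    by unfold_locales (simp_all add: sums_Re sums empty)
  interpret Im: real_signed_measure ThetaM "\<lambda>A. Im (\<nu> A)"
    by unfold_locales (simp_all add: sums_Im sums empty)
  obtain \<mu>1 \<mu>2 where \<mu>12: "finite_measure \<mu>1" "finite_measure \<mu>2" "sets \<mu>1 = sets ThetaM" "sets \<mu>2 = sets ThetaM"
    and Re: "\<forall>A\<in>sets ThetaM. Re (\<nu> A) = measure \<mu>1 A - measure \<mu>2 A"
    using Re.Jordan_decomposition by (elim exE conjE)
  obtain \<mu>3 \<mu>4 where \<mu>34: "finite_measure \<mu>3" "finite_measure \<mu>4" "sets \<mu>3 = sets ThetaM" "sets \<mu>4 = sets ThetaM"
    and Im: "\<forall>A\<in>sets ThetaM. Im (\<nu> A) = measure \<mu>3 A - measure \<mu>4 A"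
    using Im.Jordan_decomposition by (elim exE conjE)
  have "\<nu> A = complex_of_real (measure \<mu>1 A - measure \<mu>2 A) + \<i> * complex_of_real (measure \<mu>3 A - measure \<mu>4 A)"
    if "A \<in> sets ThetaM" for A
    using Re Im that by (simp add: complex_eq_iff)
  with \<mu>12 \<mu>34 show ?thesis
    by (intro exI[of _ \<mu>1] exI[of _ \<mu>2] exI[of _ \<mu>3] exI[of _ \<mu>4]) auto
qed

lemma cm_represents_exists:
  assumes "complex_measure \<nu>"
  shows "\<exists>L1 L2. cm_represents \<nu> L1 L2"
proof -
  obtain \<mu>1 \<mu>2 \<mu>3 \<mu>4 where "\<forall>\<mu>\<in>{\<mu>1, \<mu>2, \<mu>3, \<mu>4}. finite_measure \<mu> \<and> sets \<mu> = sets ThetaM"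
    "\<forall>A\<in>sets ThetaM. \<nu> A = complex_of_real (measure \<mu>1 A - measure \<mu>2 A)
                            + \<i> * complex_of_real (measure \<mu>3 A - measure \<mu>4 A)"
    using complex_measure_Jordan_decomposition[OF assms] by (elim exE conjE)
  then have "cm_represents \<nu> [(1, \<mu>1), (-1, \<mu>2)] [(1, \<mu>3), (-1, \<mu>4)]"
    by (simp add: cm_represents_def)
  then show ?thesis
    by blast
qed

text \<open>The value of \<open>cm_integral\<close>, defined through an arbitrarily chosen decomposition,
  can be computed from any representation.\<close>
lemma cm_integral_represented:
  assumes \<nu>: "complex_measure \<nu>" and rep: "cm_represents \<nu> L1 L2" and f: "bounded_measurable ThetaM f"
  shows "cm_integral \<nu> f = complex_of_real (mcomb_integral L1 f) + \<i> * complex_of_real (mcomb_integral L2 f)"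
proof -
  let ?P = "\<lambda>c. \<exists>\<mu>1 \<mu>2 \<mu>3 \<mu>4. (\<forall>\<mu>\<in>{\<mu>1, \<mu>2, \<mu>3, \<mu>4}. finite_measure \<mu> \<and> sets \<mu> = sets ThetaM) \<and>
      (\<forall>A\<in>sets ThetaM. \<nu> A = complex_of_real (measure \<mu>1 A - measure \<mu>2 A)
                              + \<i> * complex_of_real (measure \<mu>3 A - measure \<mu>4 A)) \<and>
      c = complex_of_real ((\<integral>x. f x \<partial>\<mu>1) - (\<integral>x. f x \<partial>\<mu>2))
          + \<i> * complex_of_real ((\<integral>x. f x \<partial>\<mu>3) - (\<integral>x. f x \<partial>\<mu>4))"
  obtain \<mu>1 \<mu>2 \<mu>3 \<mu>4 where "\<forall>\<mu>\<in>{\<mu>1, \<mu>2, \<mu>3, \<mu>4}. finite_measure \<mu> \<and> sets \<mu> = sets ThetaM"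
    "\<forall>A\<in>sets ThetaM. \<nu> A = complex_of_real (measure \<mu>1 A - measure \<mu>2 A)
                            + \<i> * complex_of_real (measure \<mu>3 A - measure \<mu>4 A)"
    using complex_measure_Jordan_decomposition[OF \<nu>] by (elim exE conjE)
  then have "\<exists>c. ?P c"
    by blast
  then have "?P (cm_integral \<nu> f)"
    unfolding cm_integral_def by (rule someI_ex)
  then obtain \<mu>1 \<mu>2 \<mu>3 \<mu>4 where fin: "\<forall>\<mu>\<in>{\<mu>1, \<mu>2, \<mu>3, \<mu>4}. finite_measure \<mu> \<and> sets \<mu> = sets ThetaM"
    and \<nu>_eq: "\<forall>A\<in>sets ThetaM. \<nu> A = complex_of_real (measure \<mu>1 A - measure \<mu>2 A)
                              + \<i> * complex_of_real (measure \<mu>3 A - measure \<mu>4 A)"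
    and int: "cm_integral \<nu> f = complex_of_real ((\<integral>x. f x \<partial>\<mu>1) - (\<integral>x. f x \<partial>\<mu>2))
          + \<i> * complex_of_real ((\<integral>x. f x \<partial>\<mu>3) - (\<integral>x. f x \<partial>\<mu>4))"
    by (elim exE conjE)
  have L: "mcomb_on ThetaM L1" "mcomb_on ThetaM L2"
    and rep_eq: "\<And>A. A \<in> sets ThetaM \<Longrightarrow>
      \<nu> A = complex_of_real (mcomb_measure L1 A) + \<i> * complex_of_real (mcomb_measure L2 A)"
    using rep by (simp_all add: cm_represents_def)
  have "mcomb_integral ([(1, \<mu>1), (-1, \<mu>2)] @ mcomb_scale (-1) L1) f = 0"
  proof (rule mcomb_integral_eq_0[OF _ _ f])
    show "mcomb_on ThetaM ([(1, \<mu>1), (-1, \<mu>2)] @ mcomb_scale (-1) L1)"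
      using fin L by simp
    show "mcomb_measure ([(1, \<mu>1), (-1, \<mu>2)] @ mcomb_scale (-1) L1) A = 0" if "A \<in> sets ThetaM" for A
      using arg_cong[OF rep_eq[OF that], of Re] \<nu>_eq that by simp
  qed
  moreover have "mcomb_integral ([(1, \<mu>3), (-1, \<mu>4)] @ mcomb_scale (-1) L2) f = 0"
  proof (rule mcomb_integral_eq_0[OF _ _ f])
    show "mcomb_on ThetaM ([(1, \<mu>3), (-1, \<mu>4)] @ mcomb_scale (-1) L2)"
      using fin L by simp
    show "mcomb_measure ([(1, \<mu>3), (-1, \<mu>4)] @ mcomb_scale (-1) L2) A = 0" if "A \<in> sets ThetaM" for A
      using arg_cong[OF rep_eq[OF that], of Im] \<nu>_eq that by simp
  qed
  ultimately show ?thesis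
    by (simp add: int complex_eq_iff)
qed

lemma complex_measureI_represented:
  fixes \<nu> :: "(int^'d::finite \<Rightarrow> real) set \<Rightarrow> complex"
  assumes rep: "cm_represents \<nu> L1 L2" and null: "\<And>A. A \<notin> sets ThetaM \<Longrightarrow> \<nu> A = 0"
  shows "complex_measure \<nu>"
  unfolding complex_measure_def
proof (intro conjI allI impI)
  have "{} \<in> sets ThetaM"
    by simp
  then show "\<nu> {} = 0"
    using rep by (simp add: cm_represents_def)
  fix A :: "nat \<Rightarrow> (int^'d \<Rightarrow> real) set" assume A: "range A \<subseteq> sets ThetaM" "disjoint_family A"
  then have "(\<lambda>n. complex_of_real (mcomb_measure L1 (A n)) + \<i> * complex_of_real (mcomb_measure L2 (A n)))
      sums (complex_of_real (mcomb_measure L1 (\<Union>n. A n)) + \<i> * complex_of_real (mcomb_measure L2 (\<Union>n. A n)))"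
    using rep unfolding cm_represents_def
    by (intro sums_add sums_mult sums_of_real mcomb_measure_sums[of ThetaM]) auto
  moreover have "(\<Union>n. A n) \<in> sets ThetaM"
    using A by auto
  ultimately show "(\<lambda>n. \<nu> (A n)) sums \<nu> (\<Union>n. A n)"
    using A rep by (simp add: cm_represents_def subset_eq)
qed (use null in blast)

lemma cm_integral_diff:
  assumes \<nu>: "complex_measure \<nu>" and f: "bounded_measurable ThetaM f" and g: "bounded_measurable ThetaM g"
  shows "cm_integral \<nu> (\<lambda>x. f x - g x) = cm_integral \<nu> f - cm_integral \<nu> g"
proof -
  obtain L1 L2 where rep: "cm_represents \<nu> L1 L2"
    using cm_represents_exists[OF \<nu>] by blast
  then have "mcomb_on ThetaM L1" "mcomb_on ThetaM L2"
    by (simp_all add: cm_represents_def)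
  with f g show ?thesis
    by (simp add: cm_integral_represented[OF \<nu> rep] bounded_measurable_diff mcomb_integral_diff
        complex_eq_iff)
qed

lemma cm_integral_cmult:
  assumes \<nu>: "complex_measure \<nu>" and f: "bounded_measurable ThetaM f"
  shows "cm_integral \<nu> (\<lambda>x. r * f x) = complex_of_real r * cm_integral \<nu> f"
proof -
  obtain L1 L2 where rep: "cm_represents \<nu> L1 L2"
    using cm_represents_exists[OF \<nu>] by blast
  have "bounded_measurable ThetaM (\<lambda>x. r * f x)"
    using f by (intro bounded_measurable_mult bounded_measurable_const)
  with f show ?thesis
    by (simp add: cm_integral_represented[OF \<nu> rep] mcomb_integral_cmult algebra_simps)
qed

lemma cm_integral_cong:
  assumes \<nu>: "complex_measure \<nu>" and f: "bounded_measurable ThetaM f" and g: "bounded_measurable ThetaM g"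
    and eq: "\<And>x. x \<in> Theta \<Longrightarrow> f x = g x"
  shows "cm_integral \<nu> f = cm_integral \<nu> g"
proof -
  obtain L1 L2 where rep: "cm_represents \<nu> L1 L2"
    using cm_represents_exists[OF \<nu>] by blast
  then have "mcomb_on ThetaM L1" "mcomb_on ThetaM L2"
    by (simp_all add: cm_represents_def)
  then have "mcomb_integral L1 f = mcomb_integral L1 g" "mcomb_integral L2 f = mcomb_integral L2 g"
    using eq by (auto intro: mcomb_integral_cong simp: space_ThetaM)
  with f g show ?thesis
    by (simp add: cm_integral_represented[OF \<nu> rep])
qed

lemma cm_integral_bounded:
  fixes \<nu> :: "(int^'d::finite \<Rightarrow> real) set \<Rightarrow> complex"
  assumes \<nu>: "complex_measure \<nu>"
  shows "\<exists>T\<ge>0. \<forall>f K. bounded_measurable ThetaM f \<longrightarrow> (\<forall>x\<in>Theta. \<bar>f x\<bar> \<le> K)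
    \<longrightarrow> cmod (cm_integral \<nu> f) \<le> K * T"
proof -
  obtain L1 L2 where rep: "cm_represents \<nu> L1 L2"
    using cm_represents_exists[OF \<nu>] by blast
  then have L: "mcomb_on ThetaM L1" "mcomb_on ThetaM L2"
    by (simp_all add: cm_represents_def)
  show ?thesis
  proof (intro exI[of _ "mcomb_mass L1 + mcomb_mass L2"] conjI allI impI)
  show "0 \<le> mcomb_mass L1 + mcomb_mass L2"
    by (simp add: mcomb_mass_nonneg add_nonneg_nonneg)
  fix f :: "(int^'d \<Rightarrow> real) \<Rightarrow> real" and K :: real
  assume f: "bounded_measurable ThetaM f" and K: "\<forall>x\<in>Theta. \<bar>f x\<bar> \<le> K"
  have "cmod (cm_integral \<nu> f) \<le> \<bar>mcomb_integral L1 f\<bar> + \<bar>mcomb_integral L2 f\<bar>"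
    using norm_triangle_ineq[of "complex_of_real (mcomb_integral L1 f)" "\<i> * complex_of_real (mcomb_integral L2 f)"]
    by (simp add: cm_integral_represented[OF \<nu> rep f] norm_mult)
  also have "\<dots> \<le> K * mcomb_mass L1 + K * mcomb_mass L2"
    using L f K by (intro add_mono abs_mcomb_integral_le[of ThetaM]) (auto simp: space_ThetaM)
  finally show "cmod (cm_integral \<nu> f) \<le> K * (mcomb_mass L1 + mcomb_mass L2)"
    by (simp add: distrib_left)
  qed
qed

lemma cm_represents_lincomb:
  assumes "cm_represents \<nu>1 L1 L2" "cm_represents \<nu>2 K1 K2"
  shows "cm_represents (\<lambda>A. a * \<nu>1 A + b * \<nu>2 A)
    (mcomb_scale (Re a) L1 @ mcomb_scale (- Im a) L2 @ mcomb_scale (Re b) K1 @ mcomb_scale (- Im b) K2)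
    (mcomb_scale (Im a) L1 @ mcomb_scale (Re a) L2 @ mcomb_scale (Im b) K1 @ mcomb_scale (Re b) K2)"
  using assms by (simp add: cm_represents_def complex_eq_iff algebra_simps)

lemma cm_integral_lincomb_measure:
  assumes \<nu>1: "complex_measure \<nu>1" and \<nu>2: "complex_measure \<nu>2" and f: "bounded_measurable ThetaM f"
  shows "cm_integral (\<lambda>A. a * \<nu>1 A + b * \<nu>2 A) f = a * cm_integral \<nu>1 f + b * cm_integral \<nu>2 f"
proof -
  obtain L1 L2 where rep1: "cm_represents \<nu>1 L1 L2"
    using cm_represents_exists[OF \<nu>1] by blast
  obtain K1 K2 where rep2: "cm_represents \<nu>2 K1 K2"
    using cm_represents_exists[OF \<nu>2] by blast
  note rep = cm_represents_lincomb[OF rep1 rep2, of a b]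
  have "complex_measure (\<lambda>A. a * \<nu>1 A + b * \<nu>2 A)"
    using \<nu>1 \<nu>2 by (intro complex_measureI_represented[OF rep]) (simp add: complex_measure_def)
  then show ?thesis
    using cm_integral_represented[OF _ rep f]
      cm_integral_represented[OF \<nu>1 rep1 f] cm_integral_represented[OF \<nu>2 rep2 f]
    by (simp add: complex_eq_iff algebra_simps)
qed

lemma cm_represents_mult_measure:
  assumes \<nu>: "complex_measure \<nu>" and rep: "cm_represents \<nu> L1 L2" and \<phi>: "bounded_measurable ThetaM \<phi>"
  shows "cm_represents (mult_measure \<phi> \<nu>) (mcomb_mult \<phi> L1) (mcomb_mult \<phi> L2)"
proof -
  have L: "mcomb_on ThetaM L1" "mcomb_on ThetaM L2"
    using rep by (simp_all add: cm_represents_def)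
  have "mcomb_integral L (\<lambda>x. \<phi> x * indicator A x) = mcomb_measure (mcomb_mult \<phi> L) A"
    if "mcomb_on ThetaM L" "A \<in> sets ThetaM" for L A
    using mcomb_integral_mult[OF that(1) \<phi> bounded_measurable_indicator[OF that(2)]]
      mcomb_integral_indicator[OF mcomb_on_mult[OF that(1) \<phi>] that(2)]
    by simp
  then show ?thesis
    using L \<phi> bounded_measurable_mult[OF \<phi> bounded_measurable_indicator]
    by (simp add: cm_represents_def mcomb_on_mult mult_measure_def cm_integral_represented[OF \<nu> rep])
qed

lemma complex_measure_mult_measure:
  assumes \<nu>: "complex_measure \<nu>" and \<phi>: "bounded_measurable ThetaM \<phi>"
  shows "complex_measure (mult_measure \<phi> \<nu>)"
proof -
  obtain L1 L2 where "cm_represents \<nu> L1 L2"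
    using cm_represents_exists[OF \<nu>] by blast
  then show ?thesis
    by (rule complex_measureI_represented[OF cm_represents_mult_measure[OF \<nu> _ \<phi>]])
      (simp add: mult_measure_def)
qed

lemma cm_integral_mult_measure:
  assumes \<nu>: "complex_measure \<nu>" and \<phi>: "bounded_measurable ThetaM \<phi>" and g: "bounded_measurable ThetaM g"
  shows "cm_integral (mult_measure \<phi> \<nu>) g = cm_integral \<nu> (\<lambda>\<theta>. \<phi> \<theta> * g \<theta>)"
proof -
  obtain L1 L2 where rep: "cm_represents \<nu> L1 L2"
    using cm_represents_exists[OF \<nu>] by blast
  then have "mcomb_on ThetaM L1" "mcomb_on ThetaM L2"
    by (simp_all add: cm_represents_def)
  then show ?thesis
    using cm_integral_represented[OF complex_measure_mult_measure[OF \<nu> \<phi>] cm_represents_mult_measure[OF \<nu> rep \<phi>] g]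
      cm_integral_represented[OF \<nu> rep bounded_measurable_mult[OF \<phi> g]] \<phi> g
    by (simp add: mcomb_integral_mult)
qed

lemma mult_measure_lincomb:
  assumes \<nu>1: "complex_measure \<nu>1" and \<nu>2: "complex_measure \<nu>2" and \<phi>: "bounded_measurable ThetaM \<phi>"
  shows "mult_measure \<phi> (\<lambda>A. a * \<nu>1 A + b * \<nu>2 A) = (\<lambda>A. a * mult_measure \<phi> \<nu>1 A + b * mult_measure \<phi> \<nu>2 A)"
  using cm_integral_lincomb_measure[OF \<nu>1 \<nu>2 bounded_measurable_mult[OF \<phi> bounded_measurable_indicator]]
  by (auto simp: mult_measure_def fun_eq_iff)

section \<open>Estimates by \<open>cm_norm\<close>\<close>

lemma le_of_forall_pos_le_add_mult:
  fixes x a b :: real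
  assumes "\<And>\<delta>. \<delta> > 0 \<Longrightarrow> x \<le> a + \<delta> * b"
  shows "x \<le> a"
proof (rule field_le_epsilon)
  fix e :: real assume "e > 0"
  define \<delta> where "\<delta> = e / (\<bar>b\<bar> + 1)"
  have "\<delta> > 0"
    using \<open>e > 0\<close> by (simp add: \<delta>_def)
  moreover have "\<delta> * b \<le> e"
  proof -
    have "\<delta> * b \<le> \<delta> * (\<bar>b\<bar> + 1)"
      using \<open>\<delta> > 0\<close> by (intro mult_left_mono) auto
    also have "\<dots> = e"
      by (simp add: \<delta>_def)
    finally show ?thesis .
  qed
  ultimately show "x \<le> a + e"
    using assms[of \<delta>] by linarith
qed

lemma cm_norm_ge:
  assumes "smooth \<psi>" "local_fun \<psi>" "\<And>\<theta>. \<theta> \<in> Theta \<Longrightarrow> \<bar>\<psi> \<theta>\<bar> \<le> 1"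
  shows "ereal (cmod (cm_integral \<nu> (partial i \<psi>))) \<le> cm_norm \<nu>"
  unfolding cm_norm_def using assms by (intro SUP_upper2[where i="(i, \<psi>)"]) auto

lemma cm_norm_nonneg: "0 \<le> cm_norm \<nu>"
proof -
  have "ereal (cmod (cm_integral \<nu> (partial 0 (cpoly_eval [])))) \<le> cm_norm \<nu>"
    by (rule cm_norm_ge[OF smooth_cpoly_eval local_fun_cpoly_eval]) simp
  moreover have "0 \<le> ereal (cmod (cm_integral \<nu> (partial 0 (cpoly_eval []))))"
    by simp
  ultimately show ?thesis
    by (rule order_trans[rotated])
qed

lemma cm_integral_cpoly_deriv_le:
  assumes \<nu>: "complex_measure \<nu>" and N: "cm_norm \<nu> = ereal N"
    and c: "c > 0" and p: "\<And>\<theta>. \<theta> \<in> Theta \<Longrightarrow> \<bar>cpoly_eval p \<theta>\<bar> \<le> c"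
  shows "cmod (cm_integral \<nu> (cpoly_eval (cpoly_deriv i p))) \<le> c * N"
proof -
  let ?\<psi> = "cpoly_eval (cpoly_scale (1 / c) p)"
  have cont: "continuous_on Theta (cpoly_eval q)" for q :: "(int^'d) cpoly"
    by (rule continuous_on_subset[OF continuous_on_cpoly_eval subset_UNIV])
  have "\<bar>?\<psi> \<theta>\<bar> \<le> 1" if "\<theta> \<in> Theta" for \<theta>
    using p[OF that] c by (simp add: abs_mult divide_le_eq)
  then have le: "cmod (cm_integral \<nu> (partial i ?\<psi>)) \<le> N"
    using cm_norm_ge[OF smooth_cpoly_eval local_fun_cpoly_eval, of "cpoly_scale (1 / c) p" \<nu> i] N
    by simp
  have "cm_integral \<nu> (partial i ?\<psi>) = cm_integral \<nu> (\<lambda>\<theta>. (1 / c) * cpoly_eval (cpoly_deriv i p) \<theta>)"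
  proof (rule cm_integral_cong[OF \<nu>])
    have "Ck 1 ?\<psi>"
      by (rule Ck_cpoly_eval)
    then show "bounded_measurable ThetaM (partial i ?\<psi>)"
      by (simp add: continuous_on_Theta_bounded_measurable)
    show "bounded_measurable ThetaM (\<lambda>\<theta>. (1 / c) * cpoly_eval (cpoly_deriv i p) \<theta>)"
      by (intro continuous_on_Theta_bounded_measurable continuous_on_mult continuous_on_const cont)
  qed (simp add: partial_cpoly_eval cpoly_eval_deriv_scale)
  also have "\<dots> = complex_of_real (1 / c) * cm_integral \<nu> (cpoly_eval (cpoly_deriv i p))"
    using \<nu> by (intro cm_integral_cmult continuous_on_Theta_bounded_measurable cont)
  finally have "cmod (cm_integral \<nu> (partial i ?\<psi>)) = cmod (cm_integral \<nu> (cpoly_eval (cpoly_deriv i p))) / c"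
    using c by (simp add: norm_divide)
  with le c show ?thesis
    by (simp add: divide_le_eq mult.commute)
qed

lemma cm_integral_antiderivative_approx_le:
  assumes \<nu>: "complex_measure \<nu>" and N: "cm_norm \<nu> = ereal N"
    and g: "continuous_on Theta g" and K: "K \<ge> 0"
    and approx: "\<And>\<delta>. \<delta> > 0 \<Longrightarrow> \<exists>p. (\<forall>\<theta>\<in>Theta. \<bar>cpoly_eval p \<theta>\<bar> \<le> K + \<delta>)
      \<and> (\<forall>\<theta>\<in>Theta. \<bar>g \<theta> - cpoly_eval (cpoly_deriv i p) \<theta>\<bar> \<le> \<delta>)"
  shows "cmod (cm_integral \<nu> g) \<le> K * N"
proof -
  obtain T where T: "\<And>f K. bounded_measurable ThetaM f \<Longrightarrow> \<forall>x\<in>Theta. \<bar>f x\<bar> \<le> K \<Longrightarrow>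
      cmod (cm_integral \<nu> f) \<le> K * T"
    using cm_integral_bounded[OF \<nu>] by blast
  show ?thesis
  proof (rule le_of_forall_pos_le_add_mult)
    fix \<delta> :: real assume "\<delta> > 0"
    then obtain p where p: "\<forall>\<theta>\<in>Theta. \<bar>cpoly_eval p \<theta>\<bar> \<le> K + \<delta>"
      and close: "\<forall>\<theta>\<in>Theta. \<bar>g \<theta> - cpoly_eval (cpoly_deriv i p) \<theta>\<bar> \<le> \<delta>"
      using approx by blast
    let ?q = "cpoly_eval (cpoly_deriv i p)"
    have q: "bounded_measurable ThetaM ?q"
      by (intro continuous_on_Theta_bounded_measurable continuous_on_subset[OF continuous_on_cpoly_eval]) simp
    have g_q: "bounded_measurable ThetaM (\<lambda>\<theta>. g \<theta> - ?q \<theta>)"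
      by (intro bounded_measurable_diff continuous_on_Theta_bounded_measurable q g)
    have "cm_integral \<nu> g = cm_integral \<nu> ?q + cm_integral \<nu> (\<lambda>\<theta>. g \<theta> - ?q \<theta>)"
      using cm_integral_diff[OF \<nu> continuous_on_Theta_bounded_measurable[OF g] q] by simp
    then have "cmod (cm_integral \<nu> g) \<le> cmod (cm_integral \<nu> ?q) + cmod (cm_integral \<nu> (\<lambda>\<theta>. g \<theta> - ?q \<theta>))"
      by (simp add: norm_triangle_ineq)
    also have "\<dots> \<le> (K + \<delta>) * N + \<delta> * T"
      using cm_integral_cpoly_deriv_le[OF \<nu> N _ p[rule_format]] T[OF g_q close] \<open>\<delta> > 0\<close> K
      by (intro add_mono) auto
    also have "\<dots> = K * N + \<delta> * (N + T)"
      by (simp add: algebra_simps)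
    finally show "cmod (cm_integral \<nu> g) \<le> K * N + \<delta> * (N + T)" .
  qed
qed

lemma abs_diff_le_deriv_bound_01:
  fixes F F' :: "real \<Rightarrow> real"
  assumes "\<And>t. t \<in> {0..1} \<Longrightarrow> (F has_real_derivative F' t) (at t within {0..1})"
    and "\<And>t. t \<in> {0..1} \<Longrightarrow> \<bar>F' t\<bar> \<le> B" and "x \<in> {0..1}"
  shows "\<bar>F x - F 0\<bar> \<le> B"
proof -
  have "norm (F x - F 0) \<le> B * norm (x - 0)"
    by (rule field_differentiable_bound[where S="{0..1}" and f'=F']) (use assms in auto)
  also have "\<dots> \<le> B"
    using assms(2)[of 0] assms(3) by (intro mult_left_le) auto
  finally show ?thesis
    by simp
qed

lemma abs_cpoly_antideriv_le:
  assumes \<theta>: "\<theta> \<in> Theta"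
    and F: "\<And>t. t \<in> {0..1} \<Longrightarrow> ((\<lambda>s. F (\<theta>(i := s))) has_real_derivative G (\<theta>(i := t))) (at t within {0..1})"
    and close: "\<And>t. t \<in> {0..1} \<Longrightarrow> \<bar>cpoly_eval q (\<theta>(i := t)) - G (\<theta>(i := t))\<bar> \<le> \<epsilon>"
  shows "\<bar>cpoly_eval (cpoly_antideriv i q) \<theta> - (F \<theta> - F (\<theta>(i := 0)))\<bar> \<le> \<epsilon>"
proof -
  let ?H = "\<lambda>t. cpoly_eval (cpoly_antideriv i q) (\<theta>(i := t)) - F (\<theta>(i := t))"
  have "\<bar>?H (\<theta> i) - ?H 0\<bar> \<le> \<epsilon>"
  proof (rule abs_diff_le_deriv_bound_01[where F'="\<lambda>t. cpoly_eval q (\<theta>(i := t)) - G (\<theta>(i := t))"])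
    show "(?H has_real_derivative cpoly_eval q (\<theta>(i := t)) - G (\<theta>(i := t))) (at t within {0..1})"
      if "t \<in> {0..1}" for t
      using DERIV_diff[OF has_field_derivative_at_within[OF has_real_derivative_cpoly_eval[of "cpoly_antideriv i q" \<theta> i t]] F[OF that]] by simp
  qed (use close Theta_coord_01[OF \<theta>] in auto)
  then show ?thesis
    by (simp add: cpoly_eval_antideriv_0)
qed

lemma cm_integral_continuous_le:
  fixes g :: "(int^'d::finite \<Rightarrow> real) \<Rightarrow> real"
  assumes \<nu>: "complex_measure \<nu>" and N: "cm_norm \<nu> = ereal N"
    and g: "continuous_on Theta g" and K: "\<And>\<theta>. \<theta> \<in> Theta \<Longrightarrow> \<bar>g \<theta>\<bar> \<le> K"
  shows "cmod (cm_integral \<nu> g) \<le> K * N"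
proof (rule cm_integral_antiderivative_approx_le[OF \<nu> N g, where i=0])
  show "K \<ge> 0"
    using K[OF zero_in_Theta] by simp
  fix \<delta> :: real assume "\<delta> > 0"
  then obtain q where q: "\<forall>\<theta>\<in>Theta. \<bar>g \<theta> - cpoly_eval q \<theta>\<bar> < \<delta>"
    using cpoly_approximation[OF g] by blast
  have "\<bar>cpoly_eval (cpoly_antideriv 0 q) \<theta>\<bar> \<le> K + \<delta>" if "\<theta> \<in> Theta" for \<theta>
  proof -
    have "\<bar>cpoly_eval q (\<theta>(0 := t))\<bar> \<le> K + \<delta>" if "t \<in> {0..1}" for t
      using q K fun_upd_in_Theta[OF \<open>\<theta> \<in> Theta\<close> that] by (smt (verit))
    then show ?thesis
      using abs_cpoly_antideriv_le[OF that, where F="\<lambda>_. 0" and G="\<lambda>_. 0"] by simp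
  qed
  moreover have "\<forall>\<theta>\<in>Theta. \<bar>g \<theta> - cpoly_eval (cpoly_deriv 0 (cpoly_antideriv 0 q)) \<theta>\<bar> \<le> \<delta>"
    using q by (simp add: less_imp_le)
  ultimately show "\<exists>p. (\<forall>\<theta>\<in>Theta. \<bar>cpoly_eval p \<theta>\<bar> \<le> K + \<delta>)
      \<and> (\<forall>\<theta>\<in>Theta. \<bar>g \<theta> - cpoly_eval (cpoly_deriv 0 p) \<theta>\<bar> \<le> \<delta>)"
    by blast
qed

lemma cm_integral_partial_le:
  fixes h g :: "(int^'d::finite \<Rightarrow> real) \<Rightarrow> real"
  assumes \<nu>: "complex_measure \<nu>" and N: "cm_norm \<nu> = ereal N"
    and h: "continuous_on Theta h" and K: "\<And>\<theta>. \<theta> \<in> Theta \<Longrightarrow> \<bar>h \<theta>\<bar> \<le> K"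
    and g: "continuous_on Theta g"
    and deriv: "\<And>\<theta>. \<theta> \<in> Theta \<Longrightarrow> ((\<lambda>t. h (\<theta>(i := t))) has_real_derivative g \<theta>) (at (\<theta> i) within {0..1})"
  shows "cmod (cm_integral \<nu> g) \<le> K * N"
proof (rule cm_integral_antiderivative_approx_le[OF \<nu> N g, where i=i])
  show "K \<ge> 0"
    using K[OF zero_in_Theta] by simp
  fix \<delta> :: real assume "\<delta> > 0"
  then obtain q r where q: "\<forall>\<theta>\<in>Theta. \<bar>g \<theta> - cpoly_eval q \<theta>\<bar> < \<delta> / 2"
    and r: "\<forall>\<theta>\<in>Theta. \<bar>h \<theta> - cpoly_eval r \<theta>\<bar> < \<delta> / 2"
    using cpoly_approximation[OF g] cpoly_approximation[OF h] by (meson half_gt_zero)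
  define p where "p = cpoly_drop i r @ cpoly_antideriv i q"
  have "\<bar>cpoly_eval p \<theta>\<bar> \<le> K + \<delta>" if \<theta>: "\<theta> \<in> Theta" for \<theta>
  proof -
    have "\<bar>cpoly_eval (cpoly_antideriv i q) \<theta> - (h \<theta> - h (\<theta>(i := 0)))\<bar> \<le> \<delta> / 2"
    proof (rule abs_cpoly_antideriv_le[OF \<theta>])
      show "((\<lambda>s. h (\<theta>(i := s))) has_real_derivative g (\<theta>(i := t))) (at t within {0..1})"
        if "t \<in> {0..1}" for t
        using deriv[OF fun_upd_in_Theta[OF \<theta> that, of i]] by simp
      show "\<bar>cpoly_eval q (\<theta>(i := t)) - g (\<theta>(i := t))\<bar> \<le> \<delta> / 2" if "t \<in> {0..1}" for t
        using q fun_upd_in_Theta[OF \<theta> that, of i] by (simp add: abs_minus_commute less_imp_le)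
    qed
    moreover have "\<bar>h (\<theta>(i := 0)) - cpoly_eval r (\<theta>(i := 0))\<bar> < \<delta> / 2"
      using r fun_upd_in_Theta[OF \<theta>, of 0] by simp
    moreover have "cpoly_eval p \<theta> = cpoly_eval r (\<theta>(i := 0)) + cpoly_eval (cpoly_antideriv i q) \<theta>"
      by (simp add: p_def cpoly_eval_drop)
    ultimately show ?thesis
      using K[OF \<theta>] by linarith
  qed
  moreover have "\<forall>\<theta>\<in>Theta. \<bar>g \<theta> - cpoly_eval (cpoly_deriv i p) \<theta>\<bar> \<le> \<delta>"
    using q \<open>\<delta> > 0\<close> by (auto simp: p_def cpoly_eval_deriv_drop intro: order_trans[OF less_imp_le])
  ultimately show "\<exists>p. (\<forall>\<theta>\<in>Theta. \<bar>cpoly_eval p \<theta>\<bar> \<le> K + \<delta>)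
      \<and> (\<forall>\<theta>\<in>Theta. \<bar>g \<theta> - cpoly_eval (cpoly_deriv i p) \<theta>\<bar> \<le> \<delta>)"
    by blast
qed

section \<open>Multiplication by a local \<open>C\<^sup>1\<close> function\<close>

lemma Bspace_cm_norm_ereal:
  assumes "\<nu> \<in> Bspace"
  shows "\<exists>N\<ge>0. cm_norm \<nu> = ereal N"
  using assms cm_norm_nonneg[of \<nu>] by (cases "cm_norm \<nu>") (auto simp: Bspace_def)

lemma partial_eq_0_outside:
  assumes S: "\<forall>\<theta> \<theta>'. (\<forall>j\<in>S. \<theta> j = \<theta>' j) \<longrightarrow> \<phi> \<theta> = \<phi> \<theta>'" and "i \<notin> S" and \<theta>: "\<theta> \<in> Theta"
  shows "partial i \<phi> \<theta> = 0"
proof (rule partial_eqI[OF \<theta>])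
  have "(\<lambda>t. \<phi> (\<theta>(i := t))) = (\<lambda>t. \<phi> \<theta>)"
    using S \<open>i \<notin> S\<close> by (auto intro!: ext)
  then show "((\<lambda>t. \<phi> (\<theta>(i := t))) has_real_derivative 0) (at (\<theta> i) within {0..1})"
    by simp
qed

text \<open>Only the finitely many sites that \<open>\<phi>\<close> depends on contribute non-zero partial derivatives.\<close>
lemma local_Ck_1_partial_bounded:
  fixes \<phi> :: "(int^'d::finite \<Rightarrow> real) \<Rightarrow> real"
  assumes "local_fun \<phi>" and "Ck 1 \<phi>"
  shows "\<exists>D. \<forall>i. \<forall>\<theta>\<in>Theta. \<bar>partial i \<phi> \<theta>\<bar> \<le> D"
proof -
  obtain S where S: "finite S" "\<forall>\<theta> \<theta>'. (\<forall>j\<in>S. \<theta> j = \<theta>' j) \<longrightarrow> \<phi> \<theta> = \<phi> \<theta>'"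
    using assms(1) unfolding local_fun_def by blast
  have "\<forall>i. \<exists>K. \<forall>\<theta>\<in>Theta. \<bar>partial i \<phi> \<theta>\<bar> \<le> K"
    using assms(2) by (auto intro: continuous_on_Theta_bounded)
  then obtain K where K: "\<And>i \<theta>. \<theta> \<in> Theta \<Longrightarrow> \<bar>partial i \<phi> \<theta>\<bar> \<le> K i"
    by metis
  have "\<bar>partial i \<phi> \<theta>\<bar> \<le> (\<Sum>j\<in>S. max (K j) 0)" if "\<theta> \<in> Theta" for i \<theta>
  proof (cases "i \<in> S")
    case True
    have "\<bar>partial i \<phi> \<theta>\<bar> \<le> max (K i) 0"
      using K[OF that, of i] by simp
    also have "\<dots> \<le> (\<Sum>j\<in>S. max (K j) 0)"
      using True S(1) by (intro member_le_sum) auto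
    finally show ?thesis .
  next
    case False
    then show ?thesis
      using partial_eq_0_outside[OF S(2) False that] by (simp add: sum_nonneg)
  qed
  then show ?thesis
    by blast
qed

text \<open>By the product rule \<open>\<phi> \<partial>\<^sub>i\<psi> = \<partial>\<^sub>i(\<phi>\<psi>) - \<psi> \<partial>\<^sub>i\<phi>\<close>; the first term is controlled
  through \<open>\<bar>\<phi>\<psi>\<bar> \<le> M\<close>, the second through \<open>\<bar>\<psi> \<partial>\<^sub>i\<phi>\<bar> \<le> D\<close>.\<close>
lemma cm_integral_mult_measure_partial_le:
  fixes \<phi> \<psi> :: "(int^'d::finite \<Rightarrow> real) \<Rightarrow> real"
  assumes \<nu>: "complex_measure \<nu>" and N: "cm_norm \<nu> = ereal N"
    and \<phi>: "Ck 1 \<phi>" and M: "\<And>\<theta>. \<theta> \<in> Theta \<Longrightarrow> \<bar>\<phi> \<theta>\<bar> \<le> M"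
    and D: "\<And>j \<theta>. \<theta> \<in> Theta \<Longrightarrow> \<bar>partial j \<phi> \<theta>\<bar> \<le> D"
    and \<psi>: "Ck 1 \<psi>" and \<psi>_le_1: "\<And>\<theta>. \<theta> \<in> Theta \<Longrightarrow> \<bar>\<psi> \<theta>\<bar> \<le> 1"
  shows "cmod (cm_integral (mult_measure \<phi> \<nu>) (partial i \<psi>)) \<le> (M + D) * N"
proof -
  let ?g = "\<lambda>\<theta>. \<phi> \<theta> * partial i \<psi> \<theta> + \<psi> \<theta> * partial i \<phi> \<theta>"
  let ?r = "\<lambda>\<theta>. \<psi> \<theta> * partial i \<phi> \<theta>"
  have cont: "continuous_on Theta \<phi>" "continuous_on Theta \<psi>"
    "continuous_on Theta (partial i \<phi>)" "continuous_on Theta (partial i \<psi>)"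
    using \<phi> \<psi> by simp_all
  then have cont_g: "continuous_on Theta ?g" and cont_r: "continuous_on Theta ?r"
    by (auto intro!: continuous_on_add continuous_on_mult)
  have "cm_integral (mult_measure \<phi> \<nu>) (partial i \<psi>) = cm_integral \<nu> (\<lambda>\<theta>. ?g \<theta> - ?r \<theta>)"
    using cm_integral_mult_measure[OF \<nu>] cont by (simp add: continuous_on_Theta_bounded_measurable)
  also have "\<dots> = cm_integral \<nu> ?g - cm_integral \<nu> ?r"
    using cont_g cont_r by (intro cm_integral_diff[OF \<nu>] continuous_on_Theta_bounded_measurable)
  finally have split: "cm_integral (mult_measure \<phi> \<nu>) (partial i \<psi>) = cm_integral \<nu> ?g - cm_integral \<nu> ?r" .
  have "cmod (cm_integral \<nu> ?g) \<le> M * N"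
  proof (rule cm_integral_partial_le[OF \<nu> N _ _ cont_g])
    show "continuous_on Theta (\<lambda>\<theta>. \<phi> \<theta> * \<psi> \<theta>)"
      using cont by (intro continuous_on_mult)
    show "\<bar>\<phi> \<theta> * \<psi> \<theta>\<bar> \<le> M" if "\<theta> \<in> Theta" for \<theta>
      using mult_mono[OF M[OF that] \<psi>_le_1[OF that]] M[OF that] by (simp add: abs_mult)
    show "((\<lambda>t. \<phi> (\<theta>(i := t)) * \<psi> (\<theta>(i := t))) has_real_derivative ?g \<theta>) (at (\<theta> i) within {0..1})"
      if "\<theta> \<in> Theta" for \<theta>
      using DERIV_mult[OF has_real_derivative_partial has_real_derivative_partial, OF _ that _ that] \<phi> \<psi>
      by (simp add: algebra_simps)
  qed
  moreover have "cmod (cm_integral \<nu> ?r) \<le> D * N"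
  proof (rule cm_integral_continuous_le[OF \<nu> N cont_r])
    show "\<bar>\<psi> \<theta> * partial i \<phi> \<theta>\<bar> \<le> D" if "\<theta> \<in> Theta" for \<theta>
      using mult_mono[OF \<psi>_le_1[OF that] D[OF that]] D[OF that] by (simp add: abs_mult)
  qed
  ultimately show ?thesis
    unfolding split by (smt (verit) norm_triangle_ineq4 distrib_right)
qed

lemma cm_norm_mult_measure_le:
  fixes \<phi> :: "(int^'d::finite \<Rightarrow> real) \<Rightarrow> real"
  assumes \<nu>: "complex_measure \<nu>" and N: "cm_norm \<nu> = ereal N"
    and \<phi>: "Ck 1 \<phi>" and M: "\<And>\<theta>. \<theta> \<in> Theta \<Longrightarrow> \<bar>\<phi> \<theta>\<bar> \<le> M"
    and D: "\<And>j \<theta>. \<theta> \<in> Theta \<Longrightarrow> \<bar>partial j \<phi> \<theta>\<bar> \<le> D"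
  shows "cm_norm (mult_measure \<phi> \<nu>) \<le> ereal ((M + D) * N)"
  unfolding cm_norm_def
proof (rule SUP_least)
  fix p :: "(int^'d) \<times> ((int^'d \<Rightarrow> real) \<Rightarrow> real)"
  assume "p \<in> {(i, \<psi>). smooth \<psi> \<and> local_fun \<psi> \<and> (\<forall>\<theta>\<in>Theta. \<bar>\<psi> \<theta>\<bar> \<le> 1)}"
  then obtain i \<psi> where p: "p = (i, \<psi>)" and "smooth \<psi>" and \<psi>_le_1: "\<forall>\<theta>\<in>Theta. \<bar>\<psi> \<theta>\<bar> \<le> 1"
    by blast
  then have "Ck 1 \<psi>"
    by (simp add: smooth_def)
  then show "ereal (cmod (cm_integral (mult_measure \<phi> \<nu>) (partial (fst p) (snd p)))) \<le> ereal ((M + D) * N)"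
    using cm_integral_mult_measure_partial_le[OF \<nu> N \<phi> M D] \<psi>_le_1 by (simp add: p)
qed

theorem lemma3p3:
  fixes \<phi> :: "(int^'d::finite \<Rightarrow> real) \<Rightarrow> real"
  assumes "local_fun \<phi>" and "Ck 1 \<phi>"
  shows "(\<forall>\<nu>\<in>Bspace. mult_measure \<phi> \<nu> \<in> Bspace)
    \<and> (\<forall>\<nu>1\<in>Bspace. \<forall>\<nu>2\<in>Bspace. \<forall>a b::complex.
         mult_measure \<phi> (\<lambda>A. a * \<nu>1 A + b * \<nu>2 A) = (\<lambda>A. a * mult_measure \<phi> \<nu>1 A + b * mult_measure \<phi> \<nu>2 A))
    \<and> (\<exists>C::real. \<forall>\<nu>\<in>Bspace. cm_norm (mult_measure \<phi> \<nu>) \<le> ereal C * cm_norm \<nu>)"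
proof -
  have \<phi>: "bounded_measurable ThetaM \<phi>"
    using assms(2) by (simp add: continuous_on_Theta_bounded_measurable)
  have "continuous_on Theta \<phi>"
    using assms(2) by simp
  then obtain M where M: "\<forall>\<theta>\<in>Theta. \<bar>\<phi> \<theta>\<bar> \<le> M"
    using continuous_on_Theta_bounded by blast
  obtain D where D: "\<forall>j. \<forall>\<theta>\<in>Theta. \<bar>partial j \<phi> \<theta>\<bar> \<le> D"
    using local_Ck_1_partial_bounded[OF assms] by blast
  have bound: "cm_norm (mult_measure \<phi> \<nu>) \<le> ereal ((M + D) * N)"
    if "\<nu> \<in> Bspace" "cm_norm \<nu> = ereal N" for \<nu> N
    using that M D by (intro cm_norm_mult_measure_le[OF _ _ assms(2)]) (auto simp: Bspace_def)
  have "mult_measure \<phi> \<nu> \<in> Bspace \<and> cm_norm (mult_measure \<phi> \<nu>) \<le> ereal (M + D) * cm_norm \<nu>"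
    if "\<nu> \<in> Bspace" for \<nu>
    using that bound[OF that] Bspace_cm_norm_ereal[OF that] complex_measure_mult_measure[OF _ \<phi>]
    by (fastforce simp: Bspace_def)
  moreover have "mult_measure \<phi> (\<lambda>A. a * \<nu>1 A + b * \<nu>2 A) = (\<lambda>A. a * mult_measure \<phi> \<nu>1 A + b * mult_measure \<phi> \<nu>2 A)"
    if "\<nu>1 \<in> Bspace" "\<nu>2 \<in> Bspace" for \<nu>1 \<nu>2 and a b :: complex
    using that by (intro mult_measure_lincomb \<phi>) (simp_all add: Bspace_def)
  ultimately show ?thesis
    by blast
qed

end
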